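(* Let $\mathbb{K}\in\{\mathbb{R},\mathbb{C}\}$, $B$ a commutative Banach algebra over $\mathbb{K}$, $(\omega_k)_{k\in\mathbb{N}}$ a convex growth family and $((\mathcal{H},\Sigma),(\omega_k)_k)$ a control pair. Consider the locally convex algebra $(\ell^\infty_{\rightarrow}(\mathcal{H},B),\star)$ and its commutator Lie algebra with $[\varphi,\psi]=\varphi\star\psi-\psi\star\varphi$. (1) The set $G_{\mathrm{ctr}}(\mathcal{H},B)$ of controlled characters is a closed subgroup of the unit group of $(\ell^\infty_{\rightarrow}(\mathcal{H},B),\star)$; inversion in this group is $\phi\mapsto\phi\circ S$ and the unit element is $x\mapsto\epsilon(x)1_B$. (2) The set $\mathfrak{g}_{\mathrm{ctr}}(\mathcal{H},B)$ of controlled infinitesimal characters is a closed Lie subalgebra of $(\ell^\infty_{\rightarrow}(\mathcal{H},B),[\cdot,\cdot])$.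
   Context: A growth family is a family $(\omega_k)_{k\in\mathbb{N}}$ of functions $\omega_k\colon\mathbb{N}_0\to\mathbb{N}$ with (W1) $\omega_k(0)=1$, $\omega_k(n)\le\omega_{k+1}(n)$; (W2) $\omega_k(n)\omega_k(m)\le\omega_k(n+m)$; (W3) for every $k_1$ there is $k_2\ge k_1$ with $\omega_{k_2}(n)\ge2^n\omega_{k_1}(n)$ for all $n$; convex means: for each $k_1$ one can choose such $k_2$ so that additionally for every $k_3\ge k_2$ some $\alpha\in]0,1[$ satisfies $\omega_{k_1}(n)^\alpha\omega_{k_3}(n)^{1-\alpha}\le\omega_{k_2}(n)$ for all $n$. For a set $J$ graded by $|\cdot|\colon J\to\mathbb{N}_0$: $\ell^1_{\leftarrow}(J)=\bigcap_k\{\sum c_\tau\tau:\sum|c_\tau|\omega_k(|\tau|)<\infty\}$ (projective limit topology); $\ell^\infty_{\rightarrow}(J,B)=\bigcup_k\{f\colon J\to B:\sup_\tau\|f(\tau)\|/\omega_k(|\tau|)<\infty\}$ (locally convex direct limit of these Banach spaces). A commutative Banach algebra: unital commutative, complete submultiplicative norm, $\|1_B\|=1$. A combinatorial Hopf algebra $(\mathcal{H},\Sigma)$: graded connected Hopf algebra over $\mathbb{K}$ (multiplication $m$, coproduct $\Delta$, counit $\epsilon$, antipode $S$) with $\Sigma\subseteq\mathcal{H}$ such that $\mathcal{H}$ is as an algebra, via a fixed isomorphism, $\mathbb{K}[\Sigma]$ or $\mathbb{K}\langle\Sigma\rangle$. With $M$ the free commutative monoid resp. free monoid on $\Sigma$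 (degree-additive grading), $\mathcal{H}=\mathbb{K}^{(M)}$, $\mathcal{H}\otimes\mathcal{H}=\mathbb{K}^{(M\times M)}$ with $|(\mu,\sigma)|=|\mu|+|\sigma|$. Control pair: $\Delta$ and $S$ extend to continuous linear maps $\ell^1_{\leftarrow}(M)\to\ell^1_{\leftarrow}(M\times M)$ resp. $\ell^1_{\leftarrow}(M)\to\ell^1_{\leftarrow}(M)$. A linear $\phi\colon\mathcal{H}\to B$ is controlled if $\phi|_M\in\ell^\infty_{\rightarrow}(M,B)$; $\ell^\infty_{\rightarrow}(\mathcal{H},B)$ denotes these maps, topologised as $\ell^\infty_{\rightarrow}(M,B)$. Convolution: $\phi\star\psi=m_B\circ(\phi\otimes\psi)\circ\Delta$. A character is a unital algebra homomorphism $\mathcal{H}\to B$; an infinitesimal character is a linear $\phi$ with $\phi(ab)=\phi(a)\epsilon(b)+\epsilon(a)\phi(b)$. Controlled (infinitesimal) characters are those that are controlled linear maps. *)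

theory Defs
  imports "HOL-Analysis.Analysis" "HOL-Library.Multiset"
begin

definition fsupp :: "('a \<Rightarrow> 'k::zero) \<Rightarrow> 'a set" where
  "fsupp f = {x. f x \<noteq> 0}"

definition finsupp :: "('a \<Rightarrow> 'k::zero) \<Rightarrow> bool" where
  "finsupp f \<longleftrightarrow> finite (fsupp f)"

definition hbasis :: "'a \<Rightarrow> 'a \<Rightarrow> 'k::{zero,one}" where
  "hbasis a = (\<lambda>b. if b = a then 1 else 0)"

definition lin_ext :: "('a \<Rightarrow> 'b \<Rightarrow> 'k::comm_semiring_1) \<Rightarrow> ('a \<Rightarrow> 'k) \<Rightarrow> 'b \<Rightarrow> 'k" where
  "lin_ext F x = (\<lambda>v. \<Sum>a\<in>fsupp x. x a * F a v)"

definition malg_mult :: "('a \<Rightarrow> 'a \<Rightarrow> 'a) \<Rightarrow> ('a \<Rightarrow> 'k::comm_semiring_1) \<Rightarrow> ('a \<Rightarrow> 'k) \<Rightarrow> 'a \<Rightarrow> 'k" where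
  "malg_mult mul x y =
     (\<lambda>p. \<Sum>(a,b)\<in>{(a,b). a \<in> fsupp x \<and> b \<in> fsupp y \<and> mul a b = p}. x a * y b)"

definition pair_mult :: "'m::times \<times> 'm \<Rightarrow> 'm \<times> 'm \<Rightarrow> 'm \<times> 'm" where
  "pair_mult p q = (fst p * fst q, snd p * snd q)"

definition free_monoid_on :: "'m::monoid_mult set \<Rightarrow> bool" where
  "free_monoid_on Sig \<longleftrightarrow> (\<forall>m. \<exists>!w. set w \<subseteq> Sig \<and> prod_list w = m)"

definition free_comm_monoid_on :: "'m::monoid_mult set \<Rightarrow> bool" where
  "free_comm_monoid_on Sig \<longleftrightarrow>
     (\<forall>a b::'m. a * b = b * a) \<and>
     (\<forall>m. \<exists>w. set w \<subseteq> Sig \<and> prod_list w = m) \<and>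
     (\<forall>w w'. set w \<subseteq> Sig \<longrightarrow> set w' \<subseteq> Sig \<longrightarrow> prod_list w = prod_list w' \<longrightarrow> mset w = mset w')"

text \<open>The algebra structure of H is the monoid algebra of M (product malg_mult (*), unit hbasis 1).
  Coproduct, counit and antipode are given by their values on the basis M.
  H \<otimes> H = K^(M \<times> M) with the componentwise monoid structure.\<close>

definition graded_connected_hopf ::
  "('m::monoid_mult \<Rightarrow> nat) \<Rightarrow> ('m \<Rightarrow> 'm \<times> 'm \<Rightarrow> 'k::field) \<Rightarrow> ('m \<Rightarrow> 'k) \<Rightarrow> ('m \<Rightarrow> 'm \<Rightarrow> 'k) \<Rightarrow> bool"
  where
  "graded_connected_hopf deg Delta eps S \<longleftrightarrow>
     \<comment> \<open>degree-additive grading, connectedness\<close>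
     deg 1 = 0 \<and> (\<forall>a b. deg (a * b) = deg a + deg b) \<and>
     (\<forall>\<mu>. deg \<mu> = 0 \<longrightarrow> \<mu> = 1) \<and>
     \<comment> \<open>coproduct and antipode take values in H \<otimes> H resp. H\<close>
     (\<forall>\<mu>. finsupp (Delta \<mu>)) \<and> (\<forall>\<mu>. finsupp (S \<mu>)) \<and>
     \<comment> \<open>coproduct and counit are graded\<close>
     (\<forall>\<mu> a b. Delta \<mu> (a, b) \<noteq> 0 \<longrightarrow> deg a + deg b = deg \<mu>) \<and>
     (\<forall>\<mu>. 0 < deg \<mu> \<longrightarrow> eps \<mu> = 0) \<and>
     \<comment> \<open>coproduct and counit are algebra morphisms\<close>
     Delta 1 = hbasis (1, 1) \<and>
     (\<forall>\<mu> \<nu>. Delta (\<mu> * \<nu>) = malg_mult pair_mult (Delta \<mu>) (Delta \<nu>)) \<and>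
     eps 1 = 1 \<and> (\<forall>\<mu> \<nu>. eps (\<mu> * \<nu>) = eps \<mu> * eps \<nu>) \<and>
     \<comment> \<open>coassociativity: (Delta \<otimes> id) Delta = (id \<otimes> Delta) Delta\<close>
     (\<forall>\<mu> x y z. (\<Sum>a\<in>{a. Delta \<mu> (a, z) \<noteq> 0}. Delta \<mu> (a, z) * Delta a (x, y))
                = (\<Sum>b\<in>{b. Delta \<mu> (x, b) \<noteq> 0}. Delta \<mu> (x, b) * Delta b (y, z))) \<and>
     \<comment> \<open>counit: (eps \<otimes> id) Delta = id = (id \<otimes> eps) Delta\<close>
     (\<forall>\<mu> \<nu>. (\<Sum>a\<in>{a. Delta \<mu> (a, \<nu>) \<noteq> 0}. eps a * Delta \<mu> (a, \<nu>)) = hbasis \<mu> \<nu>) \<and>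
     (\<forall>\<mu> \<nu>. (\<Sum>b\<in>{b. Delta \<mu> (\<nu>, b) \<noteq> 0}. Delta \<mu> (\<nu>, b) * eps b) = hbasis \<mu> \<nu>) \<and>
     \<comment> \<open>antipode: m (S \<otimes> id) Delta = \<eta> eps = m (id \<otimes> S) Delta\<close>
     (\<forall>\<mu>. lin_ext (\<lambda>(a, b). malg_mult (*) (S a) (hbasis b)) (Delta \<mu>) = (\<lambda>\<nu>. eps \<mu> * hbasis 1 \<nu>)) \<and>
     (\<forall>\<mu>. lin_ext (\<lambda>(a, b). malg_mult (*) (hbasis a) (S b)) (Delta \<mu>) = (\<lambda>\<nu>. eps \<mu> * hbasis 1 \<nu>))"

text \<open>Combinatorial Hopf algebra: H is (via the identification H = K^(M)) the polynomial algebra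
  K[Sig] (M free commutative monoid on Sig) or the free algebra K<Sig> (M free monoid on Sig).\<close>
definition combinatorial_hopf ::
  "('m::monoid_mult \<Rightarrow> nat) \<Rightarrow> 'm set \<Rightarrow> ('m \<Rightarrow> 'm \<times> 'm \<Rightarrow> 'k::field) \<Rightarrow> ('m \<Rightarrow> 'k) \<Rightarrow> ('m \<Rightarrow> 'm \<Rightarrow> 'k) \<Rightarrow> bool"
  where
  "combinatorial_hopf deg Sig Delta eps S \<longleftrightarrow>
     (free_comm_monoid_on Sig \<or> free_monoid_on Sig) \<and> graded_connected_hopf deg Delta eps S"

definition growth_family :: "(nat \<Rightarrow> nat \<Rightarrow> nat) \<Rightarrow> bool" where
  "growth_family \<omega> \<longleftrightarrow>
     (\<forall>k n. 1 \<le> \<omega> k n) \<and>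
     (\<forall>k. \<omega> k 0 = 1) \<and> (\<forall>k n. \<omega> k n \<le> \<omega> (Suc k) n) \<and>
     (\<forall>k n m. \<omega> k n * \<omega> k m \<le> \<omega> k (n + m)) \<and>
     (\<forall>k1. \<exists>k2\<ge>k1. \<forall>n. 2 ^ n * \<omega> k1 n \<le> \<omega> k2 n)"

definition convex_growth_family :: "(nat \<Rightarrow> nat \<Rightarrow> nat) \<Rightarrow> bool" where
  "convex_growth_family \<omega> \<longleftrightarrow> growth_family \<omega> \<and>
     (\<forall>k1. \<exists>k2\<ge>k1. (\<forall>n. 2 ^ n * \<omega> k1 n \<le> \<omega> k2 n) \<and>
        (\<forall>k3\<ge>k2. \<exists>\<alpha>::real. 0 < \<alpha> \<and> \<alpha> < 1 \<and>
           (\<forall>n. real (\<omega> k1 n) powr \<alpha> * real (\<omega> k3 n) powr (1 - \<alpha>) \<le> real (\<omega> k2 n))))"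

definition l1_space :: "(nat \<Rightarrow> nat \<Rightarrow> nat) \<Rightarrow> ('j \<Rightarrow> nat) \<Rightarrow> ('j \<Rightarrow> 'k::real_normed_vector) set" where
  "l1_space \<omega> dg = {c. \<forall>k. (\<lambda>t. norm (c t) * real (\<omega> k (dg t))) summable_on UNIV}"

definition l1_seminorm :: "(nat \<Rightarrow> nat \<Rightarrow> nat) \<Rightarrow> ('j \<Rightarrow> nat) \<Rightarrow> nat \<Rightarrow> ('j \<Rightarrow> 'k::real_normed_vector) \<Rightarrow> real" where
  "l1_seminorm \<omega> dg k c = (\<Sum>\<^sub>\<infinity>t. norm (c t) * real (\<omega> k (dg t)))"

text \<open>Open sets of the projective limit topology (initial topology of the weighted l^1 norms).\<close>
definition l1_open :: "(nat \<Rightarrow> nat \<Rightarrow> nat) \<Rightarrow> ('j \<Rightarrow> nat) \<Rightarrow> ('j \<Rightarrow> 'k::real_normed_vector) set \<Rightarrow> bool" where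
  "l1_open \<omega> dg V \<longleftrightarrow>  V \<subseteq> l1_space \<omega> dg \<and>
     (\<forall>x\<in>V. \<exists>F e. finite F \<and> 0 < e \<and>
        {y \<in> l1_space \<omega> dg. \<forall>k\<in>F. l1_seminorm \<omega> dg k (y - x) < e} \<subseteq> V)"

definition l1_cont_linear ::
  "(nat \<Rightarrow> nat \<Rightarrow> nat) \<Rightarrow> ('i \<Rightarrow> nat) \<Rightarrow> ('j \<Rightarrow> nat) \<Rightarrow> (('i \<Rightarrow> 'k::real_normed_field) \<Rightarrow> ('j \<Rightarrow> 'k)) \<Rightarrow> bool"
  where
  "l1_cont_linear \<omega> dg1 dg2 T \<longleftrightarrow>
     (\<forall>c\<in>l1_space \<omega> dg1. T c \<in> l1_space \<omega> dg2) \<and>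
     (\<forall>a b c d. c \<in> l1_space \<omega> dg1 \<longrightarrow> d \<in> l1_space \<omega> dg1 \<longrightarrow>
        T (\<lambda>t. a * c t + b * d t) = (\<lambda>s. a * T c s + b * T d s)) \<and>
     (\<forall>V. l1_open \<omega> dg2 V \<longrightarrow> l1_open \<omega> dg1 {c \<in> l1_space \<omega> dg1. T c \<in> V})"

definition control_pair ::
  "(nat \<Rightarrow> nat \<Rightarrow> nat) \<Rightarrow> ('m::monoid_mult \<Rightarrow> nat) \<Rightarrow> ('m \<Rightarrow> 'm \<times> 'm \<Rightarrow> 'k::real_normed_field) \<Rightarrow> ('m \<Rightarrow> 'm \<Rightarrow> 'k) \<Rightarrow> bool"
  where
  "control_pair \<omega> deg Delta S \<longleftrightarrow>
     (\<exists>T. l1_cont_linear \<omega> deg (\<lambda>p. deg (fst p) + deg (snd p)) T \<and>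
          (\<forall>x. finsupp x \<longrightarrow> T x = lin_ext Delta x)) \<and>
     (\<exists>T. l1_cont_linear \<omega> deg deg T \<and> (\<forall>x. finsupp x \<longrightarrow> T x = lin_ext S x))"

definition R_or_C :: "'k::real_normed_field itself \<Rightarrow> bool" where
  "R_or_C _ \<longleftrightarrow>
     (\<exists>h::'k \<Rightarrow> real. bij h \<and> (\<forall>x y. h (x + y) = h x + h y \<and> h (x * y) = h x * h y) \<and>
         (\<forall>x. norm (h x) = norm x)) \<or>
     (\<exists>h::'k \<Rightarrow> complex. bij h \<and> (\<forall>x y. h (x + y) = h x + h y \<and> h (x * y) = h x * h y) \<and>
         (\<forall>x. norm (h x) = norm x))"

text \<open>B (a complete normed unital commutative ring with submultiplicative norm and norm 1 = 1,
  given by the type class) is a K-algebra via the structure map iota, and its norm is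
  K-homogeneous.\<close>
definition banach_algebra_over :: "('k::real_normed_field \<Rightarrow> 'b::{comm_ring_1,real_normed_algebra_1,banach}) \<Rightarrow> bool" where
  "banach_algebra_over \<iota> \<longleftrightarrow>
     \<iota> 1 = 1 \<and> (\<forall>a b. \<iota> (a + b) = \<iota> a + \<iota> b) \<and> (\<forall>a b. \<iota> (a * b) = \<iota> a * \<iota> b) \<and>
     (\<forall>a x. norm (\<iota> a * x) = norm a * norm x)"

section \<open>Controlled linear maps H \<rightarrow> B (identified with their restriction to M)\<close>

definition linf_step :: "(nat \<Rightarrow> nat \<Rightarrow> nat) \<Rightarrow> ('j \<Rightarrow> nat) \<Rightarrow> nat \<Rightarrow> ('j \<Rightarrow> 'b::real_normed_vector) set" where
  "linf_step \<omega> dg k = {f. \<exists>C. \<forall>t. norm (f t) \<le> C * real (\<omega> k (dg t))}"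

definition linf_norm :: "(nat \<Rightarrow> nat \<Rightarrow> nat) \<Rightarrow> ('j \<Rightarrow> nat) \<Rightarrow> nat \<Rightarrow> ('j \<Rightarrow> 'b::real_normed_vector) \<Rightarrow> real" where
  "linf_norm \<omega> dg k f = (SUP t. norm (f t) / real (\<omega> k (dg t)))"

definition linf :: "(nat \<Rightarrow> nat \<Rightarrow> nat) \<Rightarrow> ('j \<Rightarrow> nat) \<Rightarrow> ('j \<Rightarrow> 'b::real_normed_vector) set" where
  "linf \<omega> dg = (\<Union>k. linf_step \<omega> dg k)"

definition abs_convex :: "('k::real_normed_field \<Rightarrow> 'b::ring) \<Rightarrow> ('j \<Rightarrow> 'b) set \<Rightarrow> bool" where
  "abs_convex \<iota> U \<longleftrightarrow>
     (\<forall>u\<in>U. \<forall>v\<in>U. \<forall>a b. norm a + norm b \<le> 1 \<longrightarrow> (\<lambda>t. \<iota> a * u t + \<iota> b * v t) \<in> U)"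

text \<open>Open sets of the locally convex direct limit topology of the Banach spaces linf_step k:
  a base of 0-neighbourhoods consists of the absolutely convex sets whose intersection with
  every step is a 0-neighbourhood of that step.\<close>
definition ind_open :: "('k::real_normed_field \<Rightarrow> 'b::{comm_ring_1,real_normed_algebra_1,banach}) \<Rightarrow>
     (nat \<Rightarrow> nat \<Rightarrow> nat) \<Rightarrow> ('j \<Rightarrow> nat) \<Rightarrow> ('j \<Rightarrow> 'b) set \<Rightarrow> bool" where
  "ind_open \<iota> \<omega> dg V \<longleftrightarrow>  V \<subseteq> linf \<omega> dg \<and>
     (\<forall>x\<in>V. \<exists>U. U \<subseteq> linf \<omega> dg \<and> abs_convex \<iota> U \<and>
        (\<forall>k. \<exists>e>0. {f \<in> linf_step \<omega> dg k. linf_norm \<omega> dg k f < e} \<subseteq> U) \<and>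
        (\<forall>u\<in>U. (\<lambda>t. x t + u t) \<in> V))"

definition hconv :: "('k \<Rightarrow> 'b::comm_ring_1) \<Rightarrow> ('m \<Rightarrow> 'm \<times> 'm \<Rightarrow> 'k::zero) \<Rightarrow> ('m \<Rightarrow> 'b) \<Rightarrow> ('m \<Rightarrow> 'b) \<Rightarrow> 'm \<Rightarrow> 'b" where
  "hconv \<iota> Delta \<phi> \<psi> = (\<lambda>\<mu>. \<Sum>p\<in>fsupp (Delta \<mu>). \<iota> (Delta \<mu> p) * \<phi> (fst p) * \<psi> (snd p))"

definition hunit :: "('k \<Rightarrow> 'b::comm_ring_1) \<Rightarrow> ('m \<Rightarrow> 'k) \<Rightarrow> 'm \<Rightarrow> 'b" where
  "hunit \<iota> eps = (\<lambda>\<mu>. \<iota> (eps \<mu>) * 1)"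

definition comp_S :: "('k \<Rightarrow> 'b::comm_ring_1) \<Rightarrow> ('m \<Rightarrow> 'm \<Rightarrow> 'k::zero) \<Rightarrow> ('m \<Rightarrow> 'b) \<Rightarrow> 'm \<Rightarrow> 'b" where
  "comp_S \<iota> S \<phi> = (\<lambda>\<mu>. \<Sum>\<nu>\<in>fsupp (S \<mu>). \<iota> (S \<mu> \<nu>) * \<phi> \<nu>)"

definition lin_map :: "('k::zero \<Rightarrow> 'b::comm_ring_1) \<Rightarrow> ('m \<Rightarrow> 'b) \<Rightarrow> ('m \<Rightarrow> 'k) \<Rightarrow> 'b" where
  "lin_map \<iota> \<phi> x = (\<Sum>\<mu>\<in>fsupp x. \<iota> (x \<mu>) * \<phi> \<mu>)"

definition eps_lin :: "('m \<Rightarrow> 'k::comm_semiring_1) \<Rightarrow> ('m \<Rightarrow> 'k) \<Rightarrow> 'k" where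
  "eps_lin eps x = (\<Sum>\<mu>\<in>fsupp x. x \<mu> * eps \<mu>)"

definition is_character :: "('k::comm_semiring_1 \<Rightarrow> 'b::comm_ring_1) \<Rightarrow> ('m::monoid_mult \<Rightarrow> 'b) \<Rightarrow> bool" where
  "is_character \<iota> \<phi> \<longleftrightarrow>
     lin_map \<iota> \<phi> (hbasis 1) = 1 \<and>
     (\<forall>x y. finsupp x \<longrightarrow> finsupp y \<longrightarrow>
        lin_map \<iota> \<phi> (malg_mult (*) x y) = lin_map \<iota> \<phi> x * lin_map \<iota> \<phi> y)"

definition is_inf_character :: "('k::comm_semiring_1 \<Rightarrow> 'b::comm_ring_1) \<Rightarrow> ('m::monoid_mult \<Rightarrow> 'k) \<Rightarrow> ('m \<Rightarrow> 'b) \<Rightarrow> bool" where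
  "is_inf_character \<iota> eps \<phi> \<longleftrightarrow>
     (\<forall>x y. finsupp x \<longrightarrow> finsupp y \<longrightarrow>
        lin_map \<iota> \<phi> (malg_mult (*) x y)
          = lin_map \<iota> \<phi> x * \<iota> (eps_lin eps y) + \<iota> (eps_lin eps x) * lin_map \<iota> \<phi> y)"

definition ctr_units ::
  "('k::real_normed_field \<Rightarrow> 'b::{comm_ring_1,real_normed_algebra_1,banach}) \<Rightarrow> (nat \<Rightarrow> nat \<Rightarrow> nat) \<Rightarrow> ('m \<Rightarrow> nat) \<Rightarrow>
   ('m \<Rightarrow> 'm \<times> 'm \<Rightarrow> 'k) \<Rightarrow> ('m \<Rightarrow> 'k) \<Rightarrow> ('m \<Rightarrow> 'b) set" where
  "ctr_units \<iota> \<omega> deg Delta eps =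
     {\<phi> \<in> linf \<omega> deg. \<exists>\<psi>\<in>linf \<omega> deg.
        hconv \<iota> Delta \<phi> \<psi> = hunit \<iota> eps \<and> hconv \<iota> Delta \<psi> \<phi> = hunit \<iota> eps}"

definition ctr_chars ::
  "('k::real_normed_field \<Rightarrow> 'b::{comm_ring_1,real_normed_algebra_1,banach}) \<Rightarrow> (nat \<Rightarrow> nat \<Rightarrow> nat) \<Rightarrow> ('m::monoid_mult \<Rightarrow> nat) \<Rightarrow> ('m \<Rightarrow> 'b) set" where
  "ctr_chars \<iota> \<omega> deg = {\<phi> \<in> linf \<omega> deg. is_character \<iota> \<phi>}"

definition ctr_inf_chars ::
  "('k::real_normed_field \<Rightarrow> 'b::{comm_ring_1,real_normed_algebra_1,banach}) \<Rightarrow> (nat \<Rightarrow> nat \<Rightarrow> nat) \<Rightarrow> ('m::monoid_mult \<Rightarrow> nat) \<Rightarrow> ('m \<Rightarrow> 'k) \<Rightarrow> ('m \<Rightarrow> 'b) set" where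
  "ctr_inf_chars \<iota> \<omega> deg eps = {\<phi> \<in> linf \<omega> deg. is_inf_character \<iota> eps \<phi>}"

end

theory Submission
  imports Defs
begin

text \<open>
  Continuity of the
  coproduct and the antipode on the weighted \<open>\<ell>\<^sup>1\<close> spaces yields, tested on basis vectors, kernel
  bounds \<open>\<Sum> |\<Delta>(\<mu>)(a,b)| \<omega>\<^sub>k(|a|+|b|) \<le> C \<omega>\<^sub>K(|\<mu>|)\<close>; with submultiplicativity of \<open>\<omega>\<^sub>k\<close> this makes
  convolution and composition with \<open>S\<close> preserve controlled maps.

  Algebraically, \<open>\<phi> \<star> \<psi>\<close> is multiplicative because \<open>\<Delta>\<close> is, \<open>\<phi> \<circ> S\<close> is a two-sided inverse of a
  character by the antipode identities, and \<open>\<phi> \<circ> S\<close> is again multiplicative because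
  \<open>(b, d) \<mapsto> \<psi>(b d)\<close> and \<open>(b, d) \<mapsto> \<psi>(b) \<psi>(d)\<close> both invert \<open>\<phi> \<otimes> \<phi>\<close> on \<open>H \<otimes> H\<close>, where inverses
  are unique by connectedness and induction on the degree. Infinitesimal characters are handled
  by expanding \<open>(\<phi> \<star> \<psi>)(\<mu> \<nu>)\<close>; the symmetric cross terms cancel in the commutator.

  Closedness: (infinitesimal) characters are cut out by equations involving only finitely many
  coordinates, and a set defined by an open condition on finitely many coordinates is open in the
  direct limit topology, since coordinate balls are absolutely convex and contain a ball of every step.
\<close>

lemma fsupp_hbasis [simp]: "fsupp (hbasis a :: _ \<Rightarrow> 'k::zero_neq_one) = {a}"
  by (auto simp: fsupp_def hbasis_def)

lemma finsupp_hbasis [simp]: "finsupp (hbasis a :: _ \<Rightarrow> 'k::zero_neq_one)"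
  by (simp add: finsupp_def)

lemma malg_mult_hbasis:
  "malg_mult mul (hbasis a) (hbasis b) = (hbasis (mul a b) :: _ \<Rightarrow> 'k::comm_semiring_1)"
proof
  fix p
  have "{(a', b'). a' \<in> fsupp (hbasis a :: _ \<Rightarrow> 'k) \<and> b' \<in> fsupp (hbasis b :: _ \<Rightarrow> 'k) \<and> mul a' b' = p}
       = (if mul a b = p then {(a, b)} else {})"
    by auto
  then show "malg_mult mul (hbasis a) (hbasis b) p = (hbasis (mul a b) p :: 'k)"
    by (auto simp: malg_mult_def hbasis_def)
qed

lemma fsupp_malg_mult_subset:
  "fsupp (malg_mult mul x y) \<subseteq> (\<lambda>(a, b). mul a b) ` (fsupp x \<times> fsupp y)"
proof
  fix r assume r: "r \<in> fsupp (malg_mult mul x y)"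
  have "{(a, b). a \<in> fsupp x \<and> b \<in> fsupp y \<and> mul a b = r} \<noteq> {}"
  proof
    assume e: "{(a, b). a \<in> fsupp x \<and> b \<in> fsupp y \<and> mul a b = r} = {}"
    have "malg_mult mul x y r = 0" unfolding malg_mult_def e by simp
    with r show False by (simp add: fsupp_def)
  qed
  then show "r \<in> (\<lambda>(a, b). mul a b) ` (fsupp x \<times> fsupp y)" by force
qed

lemma finsupp_malg_mult: "finsupp x \<Longrightarrow> finsupp y \<Longrightarrow> finsupp (malg_mult mul x y)"
  unfolding finsupp_def by (rule finite_subset[OF fsupp_malg_mult_subset]) simp

lemma finsupp_smult_hbasis: "finsupp (\<lambda>t. a * hbasis \<mu> t :: 'k::comm_semiring_1)"
  unfolding finsupp_def by (rule finite_subset[of _ "{\<mu>}"]) (auto simp: fsupp_def hbasis_def)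

lemma lin_ext_smult_hbasis:
  "lin_ext G (\<lambda>t. a * hbasis \<mu> t) = (\<lambda>s. a * G \<mu> s :: 'k::comm_semiring_1)"
proof (cases "a = 0")
  case False
  then have "fsupp (\<lambda>t. a * hbasis \<mu> t) = {\<mu>}" by (auto simp: fsupp_def hbasis_def)
  then show ?thesis by (simp add: lin_ext_def hbasis_def)
qed (simp add: lin_ext_def fsupp_def)

lemma eps_lin_hbasis: "eps_lin eps (hbasis \<nu> :: _ \<Rightarrow> 'k::comm_semiring_1) = eps \<nu>"
  unfolding eps_lin_def fsupp_hbasis by (simp add: hbasis_def)

locale scalar_hom =
  fixes \<iota> :: "'k::comm_ring_1 \<Rightarrow> 'c::comm_ring_1"
  assumes scalar_1: "\<iota> 1 = 1"
    and scalar_add: "\<iota> (a + b) = \<iota> a + \<iota> b"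
    and scalar_mult: "\<iota> (a * b) = \<iota> a * \<iota> b"
begin

lemma scalar_0: "\<iota> 0 = 0"
  using scalar_add[of 0 0] by simp

lemma scalar_uminus: "\<iota> (- a) = - \<iota> a"
  using scalar_add[of a "- a"] by (simp add: scalar_0 eq_neg_iff_add_eq_0 add.commute)

lemma scalar_sum: "\<iota> (sum f A) = (\<Sum>x\<in>A. \<iota> (f x))"
  by (induction A rule: infinite_finite_induct) (simp_all add: scalar_0 scalar_add)

lemma lin_map_superset:
  assumes "finite A" "fsupp x \<subseteq> A"
  shows "lin_map \<iota> \<phi> x = (\<Sum>\<mu>\<in>A. \<iota> (x \<mu>) * \<phi> \<mu>)"
  unfolding lin_map_def
  by (rule sum.mono_neutral_left) (use assms in \<open>auto simp: fsupp_def scalar_0\<close>)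

lemma lin_map_hbasis [simp]: "lin_map \<iota> \<phi> (hbasis \<mu>) = \<phi> \<mu>"
  unfolding lin_map_def fsupp_hbasis by (simp add: hbasis_def scalar_1)

lemma lin_map_smult_hbasis: "lin_map \<iota> \<phi> (\<lambda>\<nu>. c * hbasis \<mu> \<nu>) = \<iota> c * \<phi> \<mu>"
  by (subst lin_map_superset[of "{\<mu>}"]) (auto simp: fsupp_def hbasis_def)

lemma comp_S_eq_lin_map: "comp_S \<iota> S \<phi> \<mu> = lin_map \<iota> \<phi> (S \<mu>)"
  by (simp add: comp_S_def lin_map_def)

lemma sum_malg_mult:
  assumes fx: "finsupp x" and fy: "finsupp y"
  shows "(\<Sum>r\<in>fsupp (malg_mult mul x y). \<iota> (malg_mult mul x y r) * h r)
       = (\<Sum>a\<in>fsupp x. \<Sum>b\<in>fsupp y. \<iota> (x a) * \<iota> (y b) * h (mul a b))"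
proof -
  let ?X = "fsupp x" and ?Y = "fsupp y" and ?g = "\<lambda>(a, b). mul a b"
  let ?R = "?g ` (?X \<times> ?Y)"
  have fX: "finite ?X" and fY: "finite ?Y" using fx fy by (auto simp: finsupp_def)
  have "(\<Sum>r\<in>fsupp (malg_mult mul x y). \<iota> (malg_mult mul x y r) * h r)
      = (\<Sum>r\<in>?R. \<iota> (malg_mult mul x y r) * h r)"
    by (rule sum.mono_neutral_left[OF _ fsupp_malg_mult_subset]) (use fX fY in \<open>auto simp: fsupp_def scalar_0\<close>)
  also have "\<dots> = (\<Sum>r\<in>?R. \<Sum>z\<in>{z \<in> ?X \<times> ?Y. ?g z = r}. \<iota> (x (fst z)) * \<iota> (y (snd z)) * h (?g z))"
  proof (rule sum.cong[OF refl])
    fix r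
    have "{(a, b). a \<in> ?X \<and> b \<in> ?Y \<and> mul a b = r} = {z \<in> ?X \<times> ?Y. ?g z = r}" by auto
    then show "\<iota> (malg_mult mul x y r) * h r = (\<Sum>z\<in>{z \<in> ?X \<times> ?Y. ?g z = r}. \<iota> (x (fst z)) * \<iota> (y (snd z)) * h (?g z))"
      by (simp add: malg_mult_def scalar_sum scalar_mult case_prod_beta sum_distrib_right)
  qed
  also have "\<dots> = (\<Sum>z\<in>?X \<times> ?Y. \<iota> (x (fst z)) * \<iota> (y (snd z)) * h (?g z))"
    by (rule sum.group) (use fX fY in auto)
  also have "\<dots> = (\<Sum>a\<in>?X. \<Sum>b\<in>?Y. \<iota> (x a) * \<iota> (y b) * h (mul a b))"
    unfolding sum.cartesian_product by (intro sum.cong refl) auto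
  finally show ?thesis .
qed

lemma lin_map_malg_mult:
  "finsupp x \<Longrightarrow> finsupp y \<Longrightarrow>
   lin_map \<iota> \<phi> (malg_mult mul x y) = (\<Sum>a\<in>fsupp x. \<Sum>b\<in>fsupp y. \<iota> (x a) * \<iota> (y b) * \<phi> (mul a b))"
  unfolding lin_map_def by (rule sum_malg_mult)

lemma lin_map_lincomb:
  assumes fP: "finite P" and fz: "\<And>p. p \<in> P \<Longrightarrow> finsupp (z p)"
  shows "lin_map \<iota> \<phi> (\<lambda>\<rho>. \<Sum>p\<in>P. c p * z p \<rho>) = (\<Sum>p\<in>P. \<iota> (c p) * lin_map \<iota> \<phi> (z p))"
proof -
  let ?R = "\<Union>p\<in>P. fsupp (z p)"
  have fR: "finite ?R" using fP fz by (auto simp: finsupp_def)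
  have "fsupp (\<lambda>\<rho>. \<Sum>p\<in>P. c p * z p \<rho>) \<subseteq> ?R"
    by (auto simp: fsupp_def intro: sum.neutral)
  then have "lin_map \<iota> \<phi> (\<lambda>\<rho>. \<Sum>p\<in>P. c p * z p \<rho>) = (\<Sum>\<rho>\<in>?R. \<iota> (\<Sum>p\<in>P. c p * z p \<rho>) * \<phi> \<rho>)"
    by (rule lin_map_superset[OF fR])
  also have "\<dots> = (\<Sum>\<rho>\<in>?R. \<Sum>p\<in>P. \<iota> (c p) * (\<iota> (z p \<rho>) * \<phi> \<rho>))"
    by (simp add: scalar_sum scalar_mult sum_distrib_right mult.assoc)
  also have "\<dots> = (\<Sum>p\<in>P. \<iota> (c p) * (\<Sum>\<rho>\<in>?R. \<iota> (z p \<rho>) * \<phi> \<rho>))"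
    by (subst sum.swap) (simp add: sum_distrib_left)
  also have "\<dots> = (\<Sum>p\<in>P. \<iota> (c p) * lin_map \<iota> \<phi> (z p))"
    by (intro sum.cong refl arg_cong[where f = "(*) _"] lin_map_superset[OF fR, symmetric]) auto
  finally show ?thesis .
qed

lemma is_character_iff:
  "is_character \<iota> \<phi> \<longleftrightarrow> \<phi> 1 = 1 \<and> (\<forall>\<mu> \<nu>. \<phi> (\<mu> * \<nu>) = \<phi> \<mu> * \<phi> \<nu>)"
proof
  assume c: "is_character \<iota> \<phi>"
  have "lin_map \<iota> \<phi> (malg_mult (*) (hbasis \<mu>) (hbasis \<nu> :: _ \<Rightarrow> 'k))
      = lin_map \<iota> \<phi> (hbasis \<mu> :: _ \<Rightarrow> 'k) * lin_map \<iota> \<phi> (hbasis \<nu> :: _ \<Rightarrow> 'k)" for \<mu> \<nu>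
    using c[unfolded is_character_def, THEN conjunct2, rule_format, OF finsupp_hbasis finsupp_hbasis] .
  moreover have "lin_map \<iota> \<phi> (hbasis 1 :: _ \<Rightarrow> 'k) = 1"
    using c unfolding is_character_def by (rule conjunct1)
  ultimately show "\<phi> 1 = 1 \<and> (\<forall>\<mu> \<nu>. \<phi> (\<mu> * \<nu>) = \<phi> \<mu> * \<phi> \<nu>)"
    by (simp add: malg_mult_hbasis)
next
  assume \<phi>: "\<phi> 1 = 1 \<and> (\<forall>\<mu> \<nu>. \<phi> (\<mu> * \<nu>) = \<phi> \<mu> * \<phi> \<nu>)"
  have "lin_map \<iota> \<phi> (malg_mult (*) x y) = lin_map \<iota> \<phi> x * lin_map \<iota> \<phi> y"
    if "finsupp x" "finsupp y" for x y :: "'a \<Rightarrow> 'k"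
  proof -
    have "lin_map \<iota> \<phi> (malg_mult (*) x y)
        = (\<Sum>a\<in>fsupp x. \<Sum>b\<in>fsupp y. (\<iota> (x a) * \<phi> a) * (\<iota> (y b) * \<phi> b))"
      by (simp add: lin_map_malg_mult[OF that] \<phi> ac_simps)
    then show ?thesis by (simp add: lin_map_def sum_product)
  qed
  with \<phi> show "is_character \<iota> \<phi>" by (simp add: is_character_def)
qed

lemma is_inf_character_iff:
  "is_inf_character \<iota> eps \<phi> \<longleftrightarrow> (\<forall>\<mu> \<nu>. \<phi> (\<mu> * \<nu>) = \<phi> \<mu> * \<iota> (eps \<nu>) + \<iota> (eps \<mu>) * \<phi> \<nu>)"
proof
  assume c: "is_inf_character \<iota> eps \<phi>"
  have "lin_map \<iota> \<phi> (malg_mult (*) (hbasis \<mu>) (hbasis \<nu> :: _ \<Rightarrow> 'k))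
      = lin_map \<iota> \<phi> (hbasis \<mu> :: _ \<Rightarrow> 'k) * \<iota> (eps_lin eps (hbasis \<nu>))
        + \<iota> (eps_lin eps (hbasis \<mu>)) * lin_map \<iota> \<phi> (hbasis \<nu> :: _ \<Rightarrow> 'k)" for \<mu> \<nu>
    using c[unfolded is_inf_character_def, rule_format, OF finsupp_hbasis finsupp_hbasis] .
  then show "\<forall>\<mu> \<nu>. \<phi> (\<mu> * \<nu>) = \<phi> \<mu> * \<iota> (eps \<nu>) + \<iota> (eps \<mu>) * \<phi> \<nu>"
    by (simp add: malg_mult_hbasis eps_lin_hbasis)
next
  assume \<phi>: "\<forall>\<mu> \<nu>. \<phi> (\<mu> * \<nu>) = \<phi> \<mu> * \<iota> (eps \<nu>) + \<iota> (eps \<mu>) * \<phi> \<nu>"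
  have "lin_map \<iota> \<phi> (malg_mult (*) x y)
      = lin_map \<iota> \<phi> x * \<iota> (eps_lin eps y) + \<iota> (eps_lin eps x) * lin_map \<iota> \<phi> y"
    if "finsupp x" "finsupp y" for x y :: "'a \<Rightarrow> 'k"
  proof -
    have "lin_map \<iota> \<phi> (malg_mult (*) x y)
        = (\<Sum>a\<in>fsupp x. \<Sum>b\<in>fsupp y. (\<iota> (x a) * \<phi> a) * (\<iota> (y b) * \<iota> (eps b)))
        + (\<Sum>a\<in>fsupp x. \<Sum>b\<in>fsupp y. (\<iota> (x a) * \<iota> (eps a)) * (\<iota> (y b) * \<phi> b))"
      unfolding lin_map_malg_mult[OF that] sum.distrib[symmetric]
      by (intro sum.cong refl) (simp add: \<phi> distrib_left mult.assoc mult.left_commute)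
    then show ?thesis
      by (simp add: lin_map_def eps_lin_def sum_product scalar_sum scalar_mult)
  qed
  then show "is_inf_character \<iota> eps \<phi>" by (simp add: is_inf_character_def)
qed

lemma inf_character_lincomb:
  assumes "is_inf_character \<iota> eps \<phi>" "is_inf_character \<iota> eps \<psi>"
  shows "is_inf_character \<iota> eps (\<lambda>t. \<iota> a * \<phi> t + \<iota> b * \<psi> t)"
  using assms by (simp add: is_inf_character_iff algebra_simps)

end

section \<open>Convolution on a graded connected Hopf algebra\<close>

lemma hunit_apply [simp]: "hunit \<iota> eps \<mu> = \<iota> (eps \<mu>)"
  by (simp add: hunit_def)

locale hopf_convolution = scalar_hom \<iota>
  for \<iota> :: "'k::field \<Rightarrow> 'b::comm_ring_1" +
  fixes deg :: "'m::monoid_mult \<Rightarrow> nat"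
    and Delta :: "'m \<Rightarrow> 'm \<times> 'm \<Rightarrow> 'k" and eps :: "'m \<Rightarrow> 'k" and S :: "'m \<Rightarrow> 'm \<Rightarrow> 'k"
  assumes hopf: "graded_connected_hopf deg Delta eps S"
begin

abbreviation conv :: "('m \<Rightarrow> 'b) \<Rightarrow> ('m \<Rightarrow> 'b) \<Rightarrow> 'm \<Rightarrow> 'b" (infixl "\<star>" 70)
  where "\<phi> \<star> \<psi> \<equiv> hconv \<iota> Delta \<phi> \<psi>"

lemma finite_fsupp_Delta: "finite (fsupp (Delta \<mu>))"
  using hopf by (simp add: graded_connected_hopf_def finsupp_def)

lemma finsupp_S: "finsupp (S \<mu>)"
  using hopf by (simp add: graded_connected_hopf_def)

lemma deg_Delta: "Delta \<mu> (a, b) \<noteq> 0 \<Longrightarrow> deg a + deg b = deg \<mu>"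
  using hopf by (simp add: graded_connected_hopf_def)

lemma deg_eq_0D: "deg \<mu> = 0 \<Longrightarrow> \<mu> = 1"
  using hopf by (simp add: graded_connected_hopf_def)

lemma Delta_1: "Delta 1 = hbasis (1, 1)"
  using hopf by (simp add: graded_connected_hopf_def)

lemma Delta_mult: "Delta (\<mu> * \<nu>) = malg_mult pair_mult (Delta \<mu>) (Delta \<nu>)"
  using hopf by (simp add: graded_connected_hopf_def)

lemma eps_mult: "eps (\<mu> * \<nu>) = eps \<mu> * eps \<nu>"
  using hopf by (simp add: graded_connected_hopf_def)

lemma counit_left: "(\<Sum>a\<in>{a. Delta \<mu> (a, \<nu>) \<noteq> 0}. eps a * Delta \<mu> (a, \<nu>)) = hbasis \<mu> \<nu>"
  using hopf unfolding graded_connected_hopf_def by blast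

lemma counit_right: "(\<Sum>b\<in>{b. Delta \<mu> (\<nu>, b) \<noteq> 0}. Delta \<mu> (\<nu>, b) * eps b) = hbasis \<mu> \<nu>"
  using hopf unfolding graded_connected_hopf_def by blast

lemma antipode_left:
  "lin_ext (\<lambda>(a, b). malg_mult (*) (S a) (hbasis b)) (Delta \<mu>) = (\<lambda>\<nu>. eps \<mu> * hbasis 1 \<nu>)"
  using hopf unfolding graded_connected_hopf_def by blast

lemma antipode_right:
  "lin_ext (\<lambda>(a, b). malg_mult (*) (hbasis a) (S b)) (Delta \<mu>) = (\<lambda>\<nu>. eps \<mu> * hbasis 1 \<nu>)"
  using hopf unfolding graded_connected_hopf_def by blast

lemma eps_eq_hbasis: "eps = hbasis 1"
proof
  fix \<mu>
  have "eps 1 = 1" and "0 < deg \<mu> \<Longrightarrow> eps \<mu> = 0"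
    using hopf unfolding graded_connected_hopf_def by blast+
  with deg_eq_0D show "eps \<mu> = hbasis 1 \<mu>" by (cases "deg \<mu>") (auto simp: hbasis_def)
qed

lemma Delta_unit_left: "Delta \<mu> (1, b) = hbasis \<mu> b"
proof -
  have fin: "finite {a. Delta \<mu> (a, b) \<noteq> 0}"
    by (rule finite_subset[OF _ finite_imageI[OF finite_fsupp_Delta]]) (force simp: fsupp_def)
  have "(\<Sum>a\<in>{a. Delta \<mu> (a, b) \<noteq> 0}. eps a * Delta \<mu> (a, b))
      = (\<Sum>a\<in>{a. Delta \<mu> (a, b) \<noteq> 0}. if a = 1 then Delta \<mu> (1, b) else 0)"
    by (intro sum.cong) (auto simp: eps_eq_hbasis hbasis_def)
  also have "\<dots> = Delta \<mu> (1, b)"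
    using fin by (simp add: sum.delta)
  finally show ?thesis using counit_left by simp
qed

lemma Delta_unit_right: "Delta \<mu> (a, 1) = hbasis \<mu> a"
proof -
  have fin: "finite {b. Delta \<mu> (a, b) \<noteq> 0}"
    by (rule finite_subset[OF _ finite_imageI[OF finite_fsupp_Delta]]) (force simp: fsupp_def)
  have "(\<Sum>b\<in>{b. Delta \<mu> (a, b) \<noteq> 0}. Delta \<mu> (a, b) * eps b)
      = (\<Sum>b\<in>{b. Delta \<mu> (a, b) \<noteq> 0}. if b = 1 then Delta \<mu> (a, 1) else 0)"
    by (intro sum.cong) (auto simp: eps_eq_hbasis hbasis_def)
  also have "\<dots> = Delta \<mu> (a, 1)"
    using fin by (simp add: sum.delta)
  finally show ?thesis using counit_right by simp
qed

lemma hconv_hunit_left: "hunit \<iota> eps \<star> \<phi> = \<phi>"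
proof
  fix \<mu>
  have "(hunit \<iota> eps \<star> \<phi>) \<mu> = (\<Sum>p\<in>fsupp (Delta \<mu>). if p = (1, \<mu>) then \<phi> \<mu> else 0)"
    unfolding hconv_def
    by (intro sum.cong refl) (auto simp: eps_eq_hbasis hbasis_def Delta_unit_left scalar_0 scalar_1 split: if_splits)
  also have "\<dots> = \<phi> \<mu>"
    using finite_fsupp_Delta by (simp add: fsupp_def Delta_unit_left hbasis_def)
  finally show "(hunit \<iota> eps \<star> \<phi>) \<mu> = \<phi> \<mu>" .
qed

lemma hconv_hunit_right: "\<phi> \<star> hunit \<iota> eps = \<phi>"
proof
  fix \<mu>
  have "(\<phi> \<star> hunit \<iota> eps) \<mu> = (\<Sum>p\<in>fsupp (Delta \<mu>). if p = (\<mu>, 1) then \<phi> \<mu> else 0)"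
    unfolding hconv_def
    by (intro sum.cong refl) (auto simp: eps_eq_hbasis hbasis_def Delta_unit_right scalar_0 scalar_1 split: if_splits)
  also have "\<dots> = \<phi> \<mu>"
    using finite_fsupp_Delta by (simp add: fsupp_def Delta_unit_right hbasis_def)
  finally show "(\<phi> \<star> hunit \<iota> eps) \<mu> = \<phi> \<mu>" .
qed

lemma hconv_at_1: "(\<phi> \<star> \<psi>) 1 = \<phi> 1 * \<psi> 1"
  unfolding hconv_def Delta_1 fsupp_hbasis by (simp add: hbasis_def scalar_1)

text \<open>Convolution of maps \<open>M \<times> M \<rightarrow> B\<close>, i.e. of linear maps on \<open>H \<otimes> H\<close>, whose coproduct is
  \<open>(id \<otimes> flip \<otimes> id) \<circ> (\<Delta> \<otimes> \<Delta>)\<close>.\<close>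
definition tensor_conv :: "('m \<Rightarrow> 'm \<Rightarrow> 'b) \<Rightarrow> ('m \<Rightarrow> 'm \<Rightarrow> 'b) \<Rightarrow> 'm \<Rightarrow> 'm \<Rightarrow> 'b" where
  "tensor_conv F G \<mu> \<nu> = (\<Sum>p\<in>fsupp (Delta \<mu>). \<Sum>q\<in>fsupp (Delta \<nu>).
      \<iota> (Delta \<mu> p) * \<iota> (Delta \<nu> q) * (F (fst p) (fst q) * G (snd p) (snd q)))"

lemma hconv_at_mult: "(\<phi> \<star> \<psi>) (\<mu> * \<nu>) = tensor_conv (\<lambda>a c. \<phi> (a * c)) (\<lambda>b d. \<psi> (b * d)) \<mu> \<nu>"
proof -
  have "(\<phi> \<star> \<psi>) (\<mu> * \<nu>) = (\<Sum>r\<in>fsupp (malg_mult pair_mult (Delta \<mu>) (Delta \<nu>)).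
      \<iota> (malg_mult pair_mult (Delta \<mu>) (Delta \<nu>) r) * (\<phi> (fst r) * \<psi> (snd r)))"
    by (simp add: hconv_def Delta_mult mult.assoc)
  also have "\<dots> = tensor_conv (\<lambda>a c. \<phi> (a * c)) (\<lambda>b d. \<psi> (b * d)) \<mu> \<nu>"
    by (subst sum_malg_mult) (simp_all add: finsupp_def finite_fsupp_Delta tensor_conv_def pair_mult_def)
  finally show ?thesis .
qed

lemma hconv_mult_hconv:
  "(\<phi> \<star> \<psi>) \<mu> * (\<phi>' \<star> \<psi>') \<nu> = tensor_conv (\<lambda>a c. \<phi> a * \<phi>' c) (\<lambda>b d. \<psi> b * \<psi>' d) \<mu> \<nu>"
  unfolding hconv_def tensor_conv_def sum_product by (intro sum.cong refl) (simp add: ac_simps)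

lemma tensor_conv_add_left:
  "tensor_conv (\<lambda>a c. F a c + F' a c) G \<mu> \<nu> = tensor_conv F G \<mu> \<nu> + tensor_conv F' G \<mu> \<nu>"
  by (simp add: tensor_conv_def distrib_left distrib_right sum.distrib)

lemma tensor_conv_add_right:
  "tensor_conv F (\<lambda>b d. G b d + G' b d) \<mu> \<nu> = tensor_conv F G \<mu> \<nu> + tensor_conv F G' \<mu> \<nu>"
  by (simp add: tensor_conv_def distrib_left distrib_right sum.distrib)

lemma tensor_conv_diff_right:
  "tensor_conv F (\<lambda>b d. G b d - G' b d) \<mu> \<nu> = tensor_conv F G \<mu> \<nu> - tensor_conv F G' \<mu> \<nu>"
  by (simp add: tensor_conv_def right_diff_distrib sum_subtractf)

text \<open>By connectedness, every term of \<open>tensor_conv F D \<mu> \<nu>\<close> other than the one indexed by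
  \<open>((1, \<mu>), (1, \<nu>))\<close> evaluates \<open>D\<close> at a pair of strictly smaller total degree.\<close>
lemma tensor_conv_leading_term:
  assumes lower: "\<And>b d. deg b + deg d < deg \<mu> + deg \<nu> \<Longrightarrow> D b d = 0"
  shows "tensor_conv F D \<mu> \<nu> = F 1 1 * D \<mu> \<nu>"
proof -
  let ?t = "\<lambda>(p, q). \<iota> (Delta \<mu> p) * \<iota> (Delta \<nu> q) * (F (fst p) (fst q) * D (snd p) (snd q))"
  let ?z = "((1, \<mu>), (1, \<nu>))"
  have z: "?z \<in> fsupp (Delta \<mu>) \<times> fsupp (Delta \<nu>)"
    by (simp add: fsupp_def Delta_unit_left hbasis_def)
  have "?t w = 0" if w: "w \<in> fsupp (Delta \<mu>) \<times> fsupp (Delta \<nu>)" "w \<noteq> ?z" for w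
  proof -
    obtain a b c d where abcd: "w = ((a, b), (c, d))" by (metis prod.collapse)
    have nz: "Delta \<mu> (a, b) \<noteq> 0" "Delta \<nu> (c, d) \<noteq> 0" using w abcd by (auto simp: fsupp_def)
    then have "a \<noteq> 1 \<or> c \<noteq> 1" using w abcd by (auto simp: Delta_unit_left hbasis_def)
    then have "deg a \<noteq> 0 \<or> deg c \<noteq> 0" using deg_eq_0D by blast
    then have "deg b + deg d < deg \<mu> + deg \<nu>" using deg_Delta[OF nz(1)] deg_Delta[OF nz(2)] by linarith
    then show ?thesis using abcd lower by simp
  qed
  then have "tensor_conv F D \<mu> \<nu> = ?t ?z"
    unfolding tensor_conv_def sum.cartesian_product
    by (subst sum.mono_neutral_right[of _ "{?z}"]) (use z finite_fsupp_Delta in \<open>auto simp: case_prod_beta\<close>)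
  then show ?thesis by (simp add: Delta_unit_left hbasis_def scalar_1)
qed

lemma tensor_conv_cancel_left:
  assumes F: "F 1 1 = 1" and eq: "\<And>\<mu> \<nu>. tensor_conv F X \<mu> \<nu> = tensor_conv F Y \<mu> \<nu>"
  shows "X = Y"
proof -
  have "X \<mu> \<nu> = Y \<mu> \<nu>" if "deg \<mu> + deg \<nu> = n" for n \<mu> \<nu>
    using that
  proof (induction n arbitrary: \<mu> \<nu> rule: less_induct)
    case (less n)
    have "X \<mu> \<nu> - Y \<mu> \<nu> = tensor_conv F (\<lambda>b d. X b d - Y b d) \<mu> \<nu>"
      by (subst tensor_conv_leading_term) (use less in \<open>simp_all add: F\<close>)
    also have "\<dots> = 0" by (simp add: tensor_conv_diff_right eq)
    finally show ?case by simp
  qed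
  then show ?thesis by blast
qed

lemma character_hunit: "is_character \<iota> (hunit \<iota> eps)"
proof -
  have "eps 1 = 1" by (simp add: eps_eq_hbasis hbasis_def)
  then show ?thesis by (simp add: is_character_iff eps_mult scalar_mult scalar_1)
qed

lemma character_hconv:
  assumes "is_character \<iota> \<phi>" "is_character \<iota> \<psi>"
  shows "is_character \<iota> (\<phi> \<star> \<psi>)"
  using assms by (simp add: is_character_iff hconv_at_1 hconv_at_mult hconv_mult_hconv)

lemma hconv_at_mult_inf_characters:
  assumes "is_inf_character \<iota> eps \<phi>" "is_inf_character \<iota> eps \<psi>"
  shows "(\<phi> \<star> \<psi>) (\<mu> * \<nu>)
    = (\<phi> \<star> \<psi>) \<mu> * \<iota> (eps \<nu>) + \<phi> \<mu> * \<psi> \<nu> + \<psi> \<mu> * \<phi> \<nu> + \<iota> (eps \<mu>) * (\<phi> \<star> \<psi>) \<nu>"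
proof -
  let ?e = "hunit \<iota> eps"
  have "(\<phi> \<star> \<psi>) (\<mu> * \<nu>) = tensor_conv (\<lambda>a c. \<phi> a * ?e c + ?e a * \<phi> c) (\<lambda>b d. \<psi> b * ?e d + ?e b * \<psi> d) \<mu> \<nu>"
    using assms by (simp add: hconv_at_mult is_inf_character_iff)
  also have "\<dots> = (\<phi> \<star> \<psi>) \<mu> * (?e \<star> ?e) \<nu> + (\<phi> \<star> ?e) \<mu> * (?e \<star> \<psi>) \<nu>
      + (?e \<star> \<psi>) \<mu> * (\<phi> \<star> ?e) \<nu> + (?e \<star> ?e) \<mu> * (\<phi> \<star> \<psi>) \<nu>"
    by (simp only: tensor_conv_add_left tensor_conv_add_right hconv_mult_hconv add.assoc)
  finally show ?thesis by (simp add: hconv_hunit_left hconv_hunit_right)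
qed

lemma inf_character_commutator:
  assumes "is_inf_character \<iota> eps \<phi>" "is_inf_character \<iota> eps \<psi>"
  shows "is_inf_character \<iota> eps (\<lambda>t. (\<phi> \<star> \<psi>) t - (\<psi> \<star> \<phi>) t)"
  unfolding is_inf_character_iff
  by (simp add: hconv_at_mult_inf_characters[OF assms] hconv_at_mult_inf_characters[OF assms(2,1)]
      algebra_simps)

lemma hconv_antipode_right:
  assumes \<phi>: "is_character \<iota> \<phi>"
  shows "\<phi> \<star> comp_S \<iota> S \<phi> = hunit \<iota> eps"
proof
  fix \<mu>
  let ?F = "\<lambda>(a, b). malg_mult (*) (hbasis a) (S b)"
  have "(\<phi> \<star> comp_S \<iota> S \<phi>) \<mu> = (\<Sum>p\<in>fsupp (Delta \<mu>). \<iota> (Delta \<mu> p) * lin_map \<iota> \<phi> (?F p))"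
    unfolding hconv_def comp_S_eq_lin_map
    using \<phi>[unfolded is_character_def] by (simp add: case_prod_beta finsupp_S mult.assoc)
  also have "\<dots> = lin_map \<iota> \<phi> (lin_ext ?F (Delta \<mu>))"
    unfolding lin_ext_def
    by (rule lin_map_lincomb[symmetric]) (auto intro: finsupp_malg_mult simp: finite_fsupp_Delta finsupp_S)
  also have "\<dots> = hunit \<iota> eps \<mu>"
    using \<phi> by (simp add: antipode_right lin_map_smult_hbasis is_character_iff)
  finally show "(\<phi> \<star> comp_S \<iota> S \<phi>) \<mu> = hunit \<iota> eps \<mu>" .
qed

lemma hconv_antipode_left:
  assumes \<phi>: "is_character \<iota> \<phi>"
  shows "comp_S \<iota> S \<phi> \<star> \<phi> = hunit \<iota> eps"
proof
  fix \<mu>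
  let ?F = "\<lambda>(a, b). malg_mult (*) (S a) (hbasis b)"
  have "(comp_S \<iota> S \<phi> \<star> \<phi>) \<mu> = (\<Sum>p\<in>fsupp (Delta \<mu>). \<iota> (Delta \<mu> p) * lin_map \<iota> \<phi> (?F p))"
    unfolding hconv_def comp_S_eq_lin_map
    using \<phi>[unfolded is_character_def] by (simp add: case_prod_beta finsupp_S mult.assoc)
  also have "\<dots> = lin_map \<iota> \<phi> (lin_ext ?F (Delta \<mu>))"
    unfolding lin_ext_def
    by (rule lin_map_lincomb[symmetric]) (auto intro: finsupp_malg_mult simp: finite_fsupp_Delta finsupp_S)
  also have "\<dots> = hunit \<iota> eps \<mu>"
    using \<phi> by (simp add: antipode_left lin_map_smult_hbasis is_character_iff)
  finally show "(comp_S \<iota> S \<phi> \<star> \<phi>) \<mu> = hunit \<iota> eps \<mu>" .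
qed

text \<open>Both \<open>(b, d) \<mapsto> \<psi> (b * d)\<close> and \<open>(b, d) \<mapsto> \<psi> b * \<psi> d\<close> are right inverses of
  \<open>(a, c) \<mapsto> \<phi> a * \<phi> c\<close> in the convolution algebra of \<open>H \<otimes> H\<close>.\<close>
lemma character_antipode:
  assumes \<phi>: "is_character \<iota> \<phi>"
  shows "is_character \<iota> (comp_S \<iota> S \<phi>)"
proof -
  let ?\<psi> = "comp_S \<iota> S \<phi>"
  have inv: "\<phi> \<star> ?\<psi> = hunit \<iota> eps" by (rule hconv_antipode_right[OF \<phi>])
  have mult: "\<phi> (a * c) = \<phi> a * \<phi> c" and unit: "\<phi> 1 = 1" for a c
    using \<phi> by (simp_all add: is_character_iff)
  have "tensor_conv (\<lambda>a c. \<phi> a * \<phi> c) (\<lambda>b d. ?\<psi> (b * d)) \<mu> \<nu>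
      = tensor_conv (\<lambda>a c. \<phi> a * \<phi> c) (\<lambda>b d. ?\<psi> b * ?\<psi> d) \<mu> \<nu>" for \<mu> \<nu>
  proof -
    have "tensor_conv (\<lambda>a c. \<phi> a * \<phi> c) (\<lambda>b d. ?\<psi> (b * d)) \<mu> \<nu> = (\<phi> \<star> ?\<psi>) (\<mu> * \<nu>)"
      by (simp add: hconv_at_mult mult)
    also have "\<dots> = (\<phi> \<star> ?\<psi>) \<mu> * (\<phi> \<star> ?\<psi>) \<nu>"
      by (simp add: inv eps_mult scalar_mult)
    finally show ?thesis by (simp add: hconv_mult_hconv)
  qed
  then have "(\<lambda>b d. ?\<psi> (b * d)) = (\<lambda>b d. ?\<psi> b * ?\<psi> d)"
    by (rule tensor_conv_cancel_left[rotated]) (simp add: unit)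
  moreover have "?\<psi> 1 = 1"
    using fun_cong[OF inv, of 1] by (simp add: hconv_at_1 unit eps_eq_hbasis hbasis_def scalar_1)
  ultimately show ?thesis by (simp add: is_character_iff fun_eq_iff)
qed

end

section \<open>Controlled maps\<close>

lemma banach_algebra_over_scalar_hom: "banach_algebra_over \<iota> \<Longrightarrow> scalar_hom \<iota>"
  by (simp add: banach_algebra_over_def scalar_hom_def)

lemma norm_scalar_mult: "banach_algebra_over \<iota> \<Longrightarrow> norm (\<iota> a * x) = norm a * norm x"
  by (simp add: banach_algebra_over_def)

lemma growth_family_ge_1: "growth_family \<omega> \<Longrightarrow> 1 \<le> real (\<omega> k n)"
  by (simp add: growth_family_def)

lemma growth_family_mono:
  assumes "growth_family \<omega>" "k \<le> k'"
  shows "real (\<omega> k n) \<le> real (\<omega> k' n)"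
proof -
  have "\<omega> k n \<le> \<omega> (Suc k) n" for k using assms(1) by (simp add: growth_family_def)
  then show ?thesis using lift_Suc_mono_le[of "\<lambda>k. \<omega> k n"] assms(2) by simp
qed

lemma growth_family_mult: "growth_family \<omega> \<Longrightarrow> real (\<omega> k a) * real (\<omega> k b) \<le> real (\<omega> k (a + b))"
  unfolding growth_family_def by (metis of_nat_le_iff of_nat_mult)

lemma linf_iff: "\<phi> \<in> linf \<omega> dg \<longleftrightarrow> (\<exists>k C. \<forall>t. norm (\<phi> t) \<le> C * real (\<omega> k (dg t)))"
  by (simp add: linf_def linf_step_def)

lemma linf_bound_eventually:
  assumes gf: "growth_family \<omega>" and "\<phi> \<in> linf \<omega> dg"
  obtains k C where "0 \<le> C" "\<And>k' t. k \<le> k' \<Longrightarrow> norm (\<phi> t) \<le> C * real (\<omega> k' (dg t))"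
proof -
  obtain k C where C: "\<And>t. norm (\<phi> t) \<le> C * real (\<omega> k (dg t))" using assms(2) linf_iff by blast
  have "norm (\<phi> t) \<le> max C 0 * real (\<omega> k' (dg t))" if "k \<le> k'" for k' t
  proof -
    have "norm (\<phi> t) \<le> max C 0 * real (\<omega> k (dg t))"
      by (rule order_trans[OF C mult_right_mono[OF max.cobounded1]]) (use growth_family_ge_1[OF gf] in simp)
    also have "\<dots> \<le> max C 0 * real (\<omega> k' (dg t))"
      using growth_family_mono[OF gf that] by (intro mult_left_mono) auto
    finally show ?thesis .
  qed
  then show ?thesis by (rule that[of "max C 0" k, OF max.cobounded2])
qed

lemma linf_add:
  assumes gf: "growth_family \<omega>" and u: "u \<in> linf \<omega> dg" and v: "v \<in> linf \<omega> dg"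
  shows "(\<lambda>t. u t + v t) \<in> linf \<omega> dg"
proof -
  obtain k1 C1 where "0 \<le> C1" and C1: "\<And>k' t. k1 \<le> k' \<Longrightarrow> norm (u t) \<le> C1 * real (\<omega> k' (dg t))"
    using linf_bound_eventually[OF gf u] by metis
  obtain k2 C2 where "0 \<le> C2" and C2: "\<And>k' t. k2 \<le> k' \<Longrightarrow> norm (v t) \<le> C2 * real (\<omega> k' (dg t))"
    using linf_bound_eventually[OF gf v] by metis
  have "norm (u t + v t) \<le> (C1 + C2) * real (\<omega> (max k1 k2) (dg t))" for t
    using norm_triangle_ineq[of "u t" "v t"] C1[of "max k1 k2" t] C2[of "max k1 k2" t]
    by (simp add: distrib_right)
  then show ?thesis unfolding linf_iff by blast
qed

lemma linf_scalar_mult: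
  assumes bao: "banach_algebra_over \<iota>" and u: "u \<in> linf \<omega> dg"
  shows "(\<lambda>t. \<iota> a * u t) \<in> linf \<omega> dg"
proof -
  obtain k C where C: "\<And>t. norm (u t) \<le> C * real (\<omega> k (dg t))" using u linf_iff by blast
  have "norm (\<iota> a * u t) \<le> (norm a * C) * real (\<omega> k (dg t))" for t
    using mult_left_mono[OF C[of t], of "norm a"] by (simp add: norm_scalar_mult[OF bao] mult.assoc)
  then show ?thesis unfolding linf_iff by blast
qed

lemma linf_lincomb:
  assumes "banach_algebra_over \<iota>" "growth_family \<omega>" "u \<in> linf \<omega> dg" "v \<in> linf \<omega> dg"
  shows "(\<lambda>t. \<iota> a * u t + \<iota> b * v t) \<in> linf \<omega> dg"
  using assms by (intro linf_add linf_scalar_mult)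

lemma hunit_hbasis_linf:
  assumes bao: "banach_algebra_over \<iota>" and gf: "growth_family \<omega>"
  shows "hunit \<iota> (hbasis a) \<in> linf \<omega> dg"
proof -
  interpret scalar_hom \<iota> by (rule banach_algebra_over_scalar_hom[OF bao])
  have "norm (hunit \<iota> (hbasis a) t) \<le> 1 * real (\<omega> 0 (dg t))" for t
    using growth_family_ge_1[OF gf] by (simp add: hbasis_def scalar_0 scalar_1)
  then show ?thesis unfolding linf_iff by blast
qed

lemma l1_seminorm_finite_support:
  assumes "finite A" "fsupp c \<subseteq> A"
  shows "l1_seminorm \<omega> dg k c = (\<Sum>t\<in>A. norm (c t) * real (\<omega> k (dg t)))"
proof -
  have "l1_seminorm \<omega> dg k c = infsum (\<lambda>t. norm (c t) * real (\<omega> k (dg t))) A"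
    unfolding l1_seminorm_def by (rule infsum_cong_neutral) (use assms in \<open>auto simp: fsupp_def\<close>)
  then show ?thesis using assms by simp
qed

lemma l1_space_finite_support:
  assumes "finite (fsupp c)"
  shows "c \<in> l1_space \<omega> dg"
proof -
  have "(\<lambda>t. norm (c t) * real (\<omega> k (dg t))) summable_on UNIV \<longleftrightarrow>
      (\<lambda>t. norm (c t) * real (\<omega> k (dg t))) summable_on fsupp c" for k
    by (rule summable_on_cong_neutral) (auto simp: fsupp_def)
  then show ?thesis using assms by (simp add: l1_space_def)
qed

lemma l1_seminorm_triangle:
  assumes "x \<in> l1_space \<omega> dg" "y \<in> l1_space \<omega> dg"
  shows "l1_seminorm \<omega> dg k y \<le> l1_seminorm \<omega> dg k x + l1_seminorm \<omega> dg k (y - x)"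
proof -
  let ?f = "\<lambda>c t. norm (c t) * real (\<omega> k (dg t))"
  have sx: "?f x summable_on UNIV" and sy: "?f y summable_on UNIV"
    using assms by (simp_all add: l1_space_def)
  have sd: "?f (y - x) summable_on UNIV"
  proof (rule summable_on_comparison_test[OF summable_on_add[OF sy sx]])
    show "?f (y - x) t \<le> ?f y t + ?f x t" for t
      using mult_right_mono[OF norm_triangle_ineq4[of "y t" "x t"], of "real (\<omega> k (dg t))"]
      by (simp add: algebra_simps)
  qed simp
  have "l1_seminorm \<omega> dg k y \<le> infsum (\<lambda>t. ?f x t + ?f (y - x) t) UNIV"
    unfolding l1_seminorm_def
  proof (rule infsum_mono[OF sy summable_on_add[OF sx sd]])
    show "?f y t \<le> ?f x t + ?f (y - x) t" for t
      using mult_right_mono[OF norm_triangle_sub[of "y t" "x t"], of "real (\<omega> k (dg t))"]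
      by (simp add: algebra_simps)
  qed
  also have "\<dots> = l1_seminorm \<omega> dg k x + l1_seminorm \<omega> dg k (y - x)"
    unfolding l1_seminorm_def by (rule infsum_add[OF sx sd])
  finally show ?thesis .
qed

lemma l1_open_seminorm_ball: "l1_open \<omega> dg {y \<in> l1_space \<omega> dg. l1_seminorm \<omega> dg k y < 1}"
  unfolding l1_open_def
proof (intro conjI ballI)
  fix x assume x: "x \<in> {y \<in> l1_space \<omega> dg. l1_seminorm \<omega> dg k y < 1}"
  let ?e = "1 - l1_seminorm \<omega> dg k x"
  have "{y \<in> l1_space \<omega> dg. \<forall>j\<in>{k}. l1_seminorm \<omega> dg j (y - x) < ?e}
      \<subseteq> {y \<in> l1_space \<omega> dg. l1_seminorm \<omega> dg k y < 1}"
  proof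
    fix y assume y: "y \<in> {y \<in> l1_space \<omega> dg. \<forall>j\<in>{k}. l1_seminorm \<omega> dg j (y - x) < ?e}"
    then have "l1_seminorm \<omega> dg k y \<le> l1_seminorm \<omega> dg k x + l1_seminorm \<omega> dg k (y - x)"
      using x by (intro l1_seminorm_triangle) auto
    with y show "y \<in> {y \<in> l1_space \<omega> dg. l1_seminorm \<omega> dg k y < 1}" by auto
  qed
  moreover have "0 < ?e" using x by simp
  ultimately show "\<exists>F e. finite F \<and> 0 < e \<and> {y \<in> l1_space \<omega> dg. \<forall>j\<in>F. l1_seminorm \<omega> dg j (y - x) < e}
      \<subseteq> {y \<in> l1_space \<omega> dg. l1_seminorm \<omega> dg k y < 1}"
    by blast
qed auto

lemma l1_seminorm_smult_hbasis:
  fixes a :: "'k::real_normed_field"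
  shows "l1_seminorm \<omega> dg k (\<lambda>t. a * hbasis \<mu> t) = norm a * real (\<omega> k (dg \<mu>))"
  by (subst l1_seminorm_finite_support[of "{\<mu>}"]) (auto simp: fsupp_def hbasis_def)

lemma l1_cont_linear_kernel_bound:
  fixes T :: "('i \<Rightarrow> 'k::real_normed_field) \<Rightarrow> ('j \<Rightarrow> 'k)" and G :: "'i \<Rightarrow> 'j \<Rightarrow> 'k"
  assumes gf: "growth_family \<omega>" and T: "l1_cont_linear \<omega> dg1 dg2 T"
    and TG: "\<And>x. finsupp x \<Longrightarrow> T x = lin_ext G x" and fG: "\<And>\<mu>. finite (fsupp (G \<mu>))"
  obtains K C where "\<And>\<mu>. (\<Sum>p\<in>fsupp (G \<mu>). norm (G \<mu> p) * real (\<omega> k (dg2 p))) \<le> C * real (\<omega> K (dg1 \<mu>))"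
proof -
  let ?O = "{c \<in> l1_space \<omega> dg1. T c \<in> {y \<in> l1_space \<omega> dg2. l1_seminorm \<omega> dg2 k y < 1}}"
  have "l1_open \<omega> dg1 ?O"
    using T l1_open_seminorm_ball unfolding l1_cont_linear_def by blast
  moreover have "T (\<lambda>_. 0) = (\<lambda>_. 0)"
    using TG[of "\<lambda>_. 0"] by (simp add: finsupp_def fsupp_def lin_ext_def)
  then have "(\<lambda>_. 0) \<in> ?O"
    by (simp add: l1_space_finite_support fsupp_def l1_seminorm_finite_support[of "{}"])
  ultimately obtain F e where F: "finite F" and e: "0 < e"
    and ball: "{y \<in> l1_space \<omega> dg1. \<forall>j\<in>F. l1_seminorm \<omega> dg1 j (y - (\<lambda>_. 0)) < e} \<subseteq> ?O"
    unfolding l1_open_def by blast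
  define K where "K = Max (insert 0 F)"
  have "(\<Sum>p\<in>fsupp (G \<mu>). norm (G \<mu> p) * real (\<omega> k (dg2 p))) \<le> (2 / e) * real (\<omega> K (dg1 \<mu>))" for \<mu>
  proof -
    define w where "w = real (\<omega> K (dg1 \<mu>))"
    have w: "1 \<le> w" unfolding w_def by (rule growth_family_ge_1[OF gf])
    define r where "r = e / (2 * w)"
    have r: "0 < r" unfolding r_def using e w by simp
    let ?c = "\<lambda>t. of_real r * hbasis \<mu> t :: 'k"
    have "l1_seminorm \<omega> dg1 j ?c < e" if "j \<in> F" for j
    proof -
      have "j \<le> K" unfolding K_def using F that by simp
      then have "l1_seminorm \<omega> dg1 j ?c \<le> r * w"
        using r growth_family_mono[OF gf] by (simp add: l1_seminorm_smult_hbasis w_def)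
      also have "\<dots> < e" unfolding r_def using e w by simp
      finally show ?thesis .
    qed
    moreover have "?c \<in> l1_space \<omega> dg1"
      using finsupp_smult_hbasis unfolding finsupp_def by (rule l1_space_finite_support)
    ultimately have "?c \<in> ?O"
      by (intro subsetD[OF ball]) (simp add: fun_diff_def)
    moreover have "T ?c = (\<lambda>s. of_real r * G \<mu> s)"
      by (simp add: TG finsupp_smult_hbasis lin_ext_smult_hbasis)
    ultimately have "l1_seminorm \<omega> dg2 k (\<lambda>s. of_real r * G \<mu> s) < 1" by simp
    moreover have "l1_seminorm \<omega> dg2 k (\<lambda>s. of_real r * G \<mu> s)
        = r * (\<Sum>p\<in>fsupp (G \<mu>). norm (G \<mu> p) * real (\<omega> k (dg2 p)))"
      using r fG by (subst l1_seminorm_finite_support[of "fsupp (G \<mu>)"])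
        (auto simp: fsupp_def sum_distrib_left norm_mult mult.assoc)
    ultimately have "(\<Sum>p\<in>fsupp (G \<mu>). norm (G \<mu> p) * real (\<omega> k (dg2 p))) < 1 / r"
      using r by (simp add: field_simps)
    also have "1 / r = (2 / e) * w" unfolding r_def using e w by simp
    finally show ?thesis unfolding w_def by simp
  qed
  then show ?thesis by (rule that)
qed

lemma hconv_linf:
  fixes \<iota> :: "'k::real_normed_field \<Rightarrow> 'b::{comm_ring_1,real_normed_algebra_1,banach}"
    and Delta :: "'m \<Rightarrow> 'm \<times> 'm \<Rightarrow> 'k"
  assumes bao: "banach_algebra_over \<iota>" and gf: "growth_family \<omega>"
    and T: "l1_cont_linear \<omega> deg (\<lambda>p. deg (fst p) + deg (snd p)) T"
    and TD: "\<And>x. finsupp x \<Longrightarrow> T x = lin_ext Delta x" and fD: "\<And>\<mu>. finite (fsupp (Delta \<mu>))"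
    and \<phi>: "\<phi> \<in> linf \<omega> deg" and \<psi>: "\<psi> \<in> linf \<omega> deg"
  shows "hconv \<iota> Delta \<phi> \<psi> \<in> linf \<omega> deg"
proof -
  obtain k1 C1 where C1: "0 \<le> C1" "\<And>k' t. k1 \<le> k' \<Longrightarrow> norm (\<phi> t) \<le> C1 * real (\<omega> k' (deg t))"
    using linf_bound_eventually[OF gf \<phi>] by metis
  obtain k2 C2 where C2: "0 \<le> C2" "\<And>k' t. k2 \<le> k' \<Longrightarrow> norm (\<psi> t) \<le> C2 * real (\<omega> k' (deg t))"
    using linf_bound_eventually[OF gf \<psi>] by metis
  define k where "k = max k1 k2"
  obtain K C where KC: "\<And>\<mu>. (\<Sum>p\<in>fsupp (Delta \<mu>). norm (Delta \<mu> p) * real (\<omega> k (deg (fst p) + deg (snd p))))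
      \<le> C * real (\<omega> K (deg \<mu>))"
    using l1_cont_linear_kernel_bound[OF gf T TD fD] by metis
  have "norm (hconv \<iota> Delta \<phi> \<psi> \<mu>) \<le> (C1 * C2 * C) * real (\<omega> K (deg \<mu>))" for \<mu>
  proof -
    have "norm (hconv \<iota> Delta \<phi> \<psi> \<mu>) \<le> (\<Sum>p\<in>fsupp (Delta \<mu>). norm (\<iota> (Delta \<mu> p) * \<phi> (fst p) * \<psi> (snd p)))"
      unfolding hconv_def by (rule norm_sum)
    also have "\<dots> \<le> (\<Sum>p\<in>fsupp (Delta \<mu>). (C1 * C2) * (norm (Delta \<mu> p) * real (\<omega> k (deg (fst p) + deg (snd p)))))"
    proof (rule sum_mono)
      fix p
      have "norm (\<iota> (Delta \<mu> p) * \<phi> (fst p) * \<psi> (snd p))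
          \<le> norm (Delta \<mu> p) * (norm (\<phi> (fst p)) * norm (\<psi> (snd p)))"
        using norm_mult_ineq[of "\<phi> (fst p)" "\<psi> (snd p)"]
        by (simp add: norm_scalar_mult[OF bao] mult.assoc mult_left_mono)
      also have "\<dots> \<le> norm (Delta \<mu> p) * ((C1 * real (\<omega> k (deg (fst p)))) * (C2 * real (\<omega> k (deg (snd p)))))"
        using C1 C2 by (intro mult_left_mono mult_mono) (auto simp: k_def)
      also have "\<dots> \<le> (C1 * C2) * (norm (Delta \<mu> p) * real (\<omega> k (deg (fst p) + deg (snd p))))"
        using C1 C2 growth_family_mult[OF gf, of k "deg (fst p)" "deg (snd p)"]
        by (simp add: ac_simps mult_left_mono)
      finally show "norm (\<iota> (Delta \<mu> p) * \<phi> (fst p) * \<psi> (snd p)) \<le> \<dots>" .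
    qed
    also have "\<dots> \<le> (C1 * C2) * (C * real (\<omega> K (deg \<mu>)))"
      using KC C1 C2 by (simp add: sum_distrib_left[symmetric] mult_left_mono)
    finally show ?thesis by (simp add: ac_simps)
  qed
  then show ?thesis unfolding linf_iff by blast
qed

lemma comp_S_linf:
  fixes \<iota> :: "'k::real_normed_field \<Rightarrow> 'b::{comm_ring_1,real_normed_algebra_1,banach}"
    and S :: "'m \<Rightarrow> 'm \<Rightarrow> 'k"
  assumes bao: "banach_algebra_over \<iota>" and gf: "growth_family \<omega>"
    and T: "l1_cont_linear \<omega> deg deg T" and TS: "\<And>x. finsupp x \<Longrightarrow> T x = lin_ext S x"
    and fS: "\<And>\<mu>. finite (fsupp (S \<mu>))" and \<phi>: "\<phi> \<in> linf \<omega> deg"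
  shows "comp_S \<iota> S \<phi> \<in> linf \<omega> deg"
proof -
  obtain k C1 where C1: "0 \<le> C1" "\<And>t. norm (\<phi> t) \<le> C1 * real (\<omega> k (deg t))"
    using linf_bound_eventually[OF gf \<phi>] by (metis order_refl)
  obtain K C where KC: "\<And>\<mu>. (\<Sum>\<nu>\<in>fsupp (S \<mu>). norm (S \<mu> \<nu>) * real (\<omega> k (deg \<nu>))) \<le> C * real (\<omega> K (deg \<mu>))"
    using l1_cont_linear_kernel_bound[OF gf T TS fS] by metis
  have "norm (comp_S \<iota> S \<phi> \<mu>) \<le> (C1 * C) * real (\<omega> K (deg \<mu>))" for \<mu>
  proof -
    have "norm (comp_S \<iota> S \<phi> \<mu>) \<le> (\<Sum>\<nu>\<in>fsupp (S \<mu>). norm (\<iota> (S \<mu> \<nu>) * \<phi> \<nu>))"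
      unfolding comp_S_def by (rule norm_sum)
    also have "\<dots> \<le> (\<Sum>\<nu>\<in>fsupp (S \<mu>). C1 * (norm (S \<mu> \<nu>) * real (\<omega> k (deg \<nu>))))"
      using mult_left_mono[OF C1(2) norm_ge_zero]
      by (intro sum_mono) (simp add: norm_scalar_mult[OF bao] mult.left_commute)
    also have "\<dots> \<le> C1 * (C * real (\<omega> K (deg \<mu>)))"
      using KC C1 by (simp add: sum_distrib_left[symmetric] mult_left_mono)
    finally show ?thesis by (simp add: ac_simps)
  qed
  then show ?thesis unfolding linf_iff by blast
qed

section \<open>Open sets of the direct limit topology\<close>

lemma linf_norm_bound:
  assumes gf: "growth_family \<omega>" and f: "f \<in> linf_step \<omega> dg k"
  shows "norm (f t) \<le> linf_norm \<omega> dg k f * real (\<omega> k (dg t))"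
proof -
  have w: "0 < real (\<omega> k (dg s))" for s using growth_family_ge_1[OF gf] by (rule less_le_trans[OF zero_less_one])
  obtain C where C: "\<And>s. norm (f s) \<le> C * real (\<omega> k (dg s))" using f by (auto simp: linf_step_def)
  have "bdd_above (range (\<lambda>s. norm (f s) / real (\<omega> k (dg s))))"
    using C w by (intro bdd_aboveI2[of _ _ C]) (simp add: divide_le_eq)
  then have "norm (f t) / real (\<omega> k (dg t)) \<le> linf_norm \<omega> dg k f"
    unfolding linf_norm_def by (rule cSUP_upper[OF UNIV_I])
  then show ?thesis using w by (simp add: divide_le_eq)
qed

lemma abs_convex_coordinate_ball:
  fixes \<iota> :: "'k::real_normed_field \<Rightarrow> 'b::{comm_ring_1,real_normed_algebra_1,banach}"
    and dg :: "'j \<Rightarrow> nat"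
  assumes bao: "banach_algebra_over \<iota>" and gf: "growth_family \<omega>"
  shows "abs_convex \<iota> {u \<in> linf \<omega> dg. \<forall>\<mu>\<in>F. norm (u \<mu>) < \<delta>}"
  unfolding abs_convex_def
proof (intro ballI allI impI)
  fix u v :: "'j \<Rightarrow> 'b" and a b :: 'k
  assume u: "u \<in> {u \<in> linf \<omega> dg. \<forall>\<mu>\<in>F. norm (u \<mu>) < \<delta>}"
    and v: "v \<in> {u \<in> linf \<omega> dg. \<forall>\<mu>\<in>F. norm (u \<mu>) < \<delta>}" and ab: "norm a + norm b \<le> 1"
  have "norm (\<iota> a * u \<mu> + \<iota> b * v \<mu>) < \<delta>" if "\<mu> \<in> F" for \<mu>
  proof -
    let ?m = "max (norm (u \<mu>)) (norm (v \<mu>))"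
    have "norm (\<iota> a * u \<mu> + \<iota> b * v \<mu>) \<le> norm a * norm (u \<mu>) + norm b * norm (v \<mu>)"
      using norm_triangle_ineq[of "\<iota> a * u \<mu>" "\<iota> b * v \<mu>"] by (simp add: norm_scalar_mult[OF bao])
    also have "\<dots> \<le> (norm a + norm b) * ?m"
      by (simp add: distrib_right add_mono mult_left_mono)
    also have "\<dots> \<le> ?m" using ab by (intro mult_left_le_one_le) (auto simp: le_max_iff_disj)
    also have "\<dots> < \<delta>" using u v that by simp
    finally show ?thesis .
  qed
  with u v show "(\<lambda>t. \<iota> a * u t + \<iota> b * v t) \<in> {u \<in> linf \<omega> dg. \<forall>\<mu>\<in>F. norm (u \<mu>) < \<delta>}"
    using linf_lincomb[OF bao gf] by blast
qed

lemma linf_step_ball_subset_coordinate_ball: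
  assumes gf: "growth_family \<omega>" and F: "finite F" and \<delta>: "0 < \<delta>"
  shows "\<exists>e>0. {f \<in> linf_step \<omega> dg k. linf_norm \<omega> dg k f < e} \<subseteq> {u \<in> linf \<omega> dg. \<forall>\<mu>\<in>F. norm (u \<mu>) < \<delta>}"
proof (intro exI conjI subsetI)
  define M where "M = 1 + (\<Sum>\<mu>\<in>F. real (\<omega> k (dg \<mu>)))"
  have M: "1 \<le> M" unfolding M_def by (simp add: sum_nonneg)
  show "0 < \<delta> / M" using \<delta> M by simp
  fix f assume f: "f \<in> {f \<in> linf_step \<omega> dg k. linf_norm \<omega> dg k f < \<delta> / M}"
  have "norm (f \<mu>) < \<delta>" if "\<mu> \<in> F" for \<mu>
  proof -
    have w: "0 < real (\<omega> k (dg \<mu>))" and wM: "real (\<omega> k (dg \<mu>)) \<le> M"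
      using growth_family_ge_1[OF gf] member_le_sum[OF that _ F, of "\<lambda>\<mu>. real (\<omega> k (dg \<mu>))"]
      by (auto simp: M_def intro: less_le_trans[OF zero_less_one])
    have "norm (f \<mu>) \<le> linf_norm \<omega> dg k f * real (\<omega> k (dg \<mu>))"
      using f by (intro linf_norm_bound[OF gf]) auto
    also have "\<dots> < \<delta> / M * real (\<omega> k (dg \<mu>))" using f w by (intro mult_strict_right_mono) auto
    also have "\<dots> \<le> \<delta> / M * M" using wM \<delta> M by (intro mult_left_mono) auto
    finally show ?thesis using M by simp
  qed
  then show "f \<in> {u \<in> linf \<omega> dg. \<forall>\<mu>\<in>F. norm (u \<mu>) < \<delta>}" using f by (auto simp: linf_def)
qed

lemma ind_openI_coordinates:
  assumes bao: "banach_algebra_over \<iota>" and gf: "growth_family \<omega>" and V: "V \<subseteq> linf \<omega> dg"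
    and nhd: "\<And>x. x \<in> V \<Longrightarrow> \<exists>F \<delta>. finite F \<and> 0 < \<delta> \<and>
       (\<forall>u \<in> linf \<omega> dg. (\<forall>\<mu>\<in>F. norm (u \<mu>) < \<delta>) \<longrightarrow> (\<lambda>t. x t + u t) \<in> V)"
  shows "ind_open \<iota> \<omega> dg V"
  unfolding ind_open_def
proof (intro conjI ballI V)
  fix x assume "x \<in> V"
  then obtain F \<delta> where F: "finite F" and \<delta>: "0 < \<delta>"
    and x: "\<forall>u \<in> linf \<omega> dg. (\<forall>\<mu>\<in>F. norm (u \<mu>) < \<delta>) \<longrightarrow> (\<lambda>t. x t + u t) \<in> V"
    using nhd by blast
  show "\<exists>U. U \<subseteq> linf \<omega> dg \<and> abs_convex \<iota> U \<and>
        (\<forall>k. \<exists>e>0. {f \<in> linf_step \<omega> dg k. linf_norm \<omega> dg k f < e} \<subseteq> U) \<and>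
        (\<forall>u\<in>U. (\<lambda>t. x t + u t) \<in> V)"
    using abs_convex_coordinate_ball[OF bao gf] linf_step_ball_subset_coordinate_ball[OF gf F \<delta>] x
    by (intro exI[of _ "{u \<in> linf \<omega> dg. \<forall>\<mu>\<in>F. norm (u \<mu>) < \<delta>}"]) blast
qed

lemma ind_open_Union:
  assumes "\<And>V. V \<in> \<V> \<Longrightarrow> ind_open \<iota> \<omega> dg V"
  shows "ind_open \<iota> \<omega> dg (\<Union>\<V>)"
  unfolding ind_open_def
proof (intro conjI ballI)
  show "\<Union>\<V> \<subseteq> linf \<omega> dg" using assms by (auto simp: ind_open_def)
  fix x assume "x \<in> \<Union>\<V>"
  then obtain V where "V \<in> \<V>" "x \<in> V" by blast
  then obtain U where "U \<subseteq> linf \<omega> dg" "abs_convex \<iota> U"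
      "\<forall>k. \<exists>e>0. {f \<in> linf_step \<omega> dg k. linf_norm \<omega> dg k f < e} \<subseteq> U" "\<forall>u\<in>U. (\<lambda>t. x t + u t) \<in> V"
    using assms unfolding ind_open_def by meson
  with \<open>V \<in> \<V>\<close> show "\<exists>U. U \<subseteq> linf \<omega> dg \<and> abs_convex \<iota> U \<and>
      (\<forall>k. \<exists>e>0. {f \<in> linf_step \<omega> dg k. linf_norm \<omega> dg k f < e} \<subseteq> U) \<and> (\<forall>u\<in>U. (\<lambda>t. x t + u t) \<in> \<Union>\<V>)"
    by blast
qed

lemma ind_open_coordinates:
  fixes A :: "('b::{comm_ring_1,real_normed_algebra_1,banach} \<times> 'b \<times> 'b) set"
  assumes bao: "banach_algebra_over \<iota>" and gf: "growth_family \<omega>" and A: "open A"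
  shows "ind_open \<iota> \<omega> dg {x \<in> linf \<omega> dg. (x \<mu>, x \<nu>, x \<rho>) \<in> A}"
proof (rule ind_openI_coordinates[OF bao gf])
  fix x assume x: "x \<in> {x \<in> linf \<omega> dg. (x \<mu>, x \<nu>, x \<rho>) \<in> A}"
  then obtain e where e: "0 < e" and ball: "ball (x \<mu>, x \<nu>, x \<rho>) e \<subseteq> A"
    using A open_contains_ball by blast
  have "(\<lambda>t. x t + u t) \<in> {x \<in> linf \<omega> dg. (x \<mu>, x \<nu>, x \<rho>) \<in> A}"
    if u: "u \<in> linf \<omega> dg" "\<forall>\<tau>\<in>{\<mu>, \<nu>, \<rho>}. norm (u \<tau>) < e / 3" for u
  proof -
    have "norm (u \<mu>, u \<nu>, u \<rho>) \<le> norm (u \<mu>) + (norm (u \<nu>) + norm (u \<rho>))"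
      by (meson add_left_mono norm_Pair_le order_trans)
    also have "\<dots> < e" using u by simp
    finally have "(x \<mu> + u \<mu>, x \<nu> + u \<nu>, x \<rho> + u \<rho>) \<in> ball (x \<mu>, x \<nu>, x \<rho>) e"
      by (subst mem_ball, subst dist_commute) (simp add: dist_norm)
    with ball u x show ?thesis by (auto intro: linf_add[OF gf])
  qed
  with e show "\<exists>F \<delta>. finite F \<and> 0 < \<delta> \<and> (\<forall>u \<in> linf \<omega> dg. (\<forall>\<tau>\<in>F. norm (u \<tau>) < \<delta>) \<longrightarrow>
      (\<lambda>t. x t + u t) \<in> {x \<in> linf \<omega> dg. (x \<mu>, x \<nu>, x \<rho>) \<in> A})"
    by (intro exI[of _ "{\<mu>, \<nu>, \<rho>}"] exI[of _ "e / 3"]) auto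
qed auto

lemma ind_open_not_character:
  fixes \<iota> :: "'k::real_normed_field \<Rightarrow> 'b::{comm_ring_1,real_normed_algebra_1,banach}"
    and dg :: "'m::monoid_mult \<Rightarrow> nat"
  assumes bao: "banach_algebra_over \<iota>" and gf: "growth_family \<omega>"
  shows "ind_open \<iota> \<omega> dg (linf \<omega> dg - {\<phi>. is_character \<iota> \<phi>})"
proof -
  interpret scalar_hom \<iota> by (rule banach_algebra_over_scalar_hom[OF bao])
  let ?unit = "{z :: 'b \<times> 'b \<times> 'b. fst z \<noteq> 1}"
  let ?mult = "{z :: 'b \<times> 'b \<times> 'b. snd (snd z) \<noteq> fst z * fst (snd z)}"
  have unit: "open ?unit" and mult: "open ?mult" by (intro open_Collect_neq continuous_intros)+
  have open_parts: "ind_open \<iota> \<omega> dg V"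
    if "V \<in> insert {x \<in> linf \<omega> dg. (x 1, x 1, x 1) \<in> ?unit}
      (range (\<lambda>p. {x \<in> linf \<omega> dg. (x (fst p), x (snd p), x (fst p * snd p)) \<in> ?mult}))" for V
    using that by (elim insertE rangeE) (simp_all only: ind_open_coordinates[OF bao gf] unit mult)
  have "linf \<omega> dg - {\<phi>. is_character \<iota> \<phi>} = \<Union> (insert {x \<in> linf \<omega> dg. (x 1, x 1, x 1) \<in> ?unit}
      (range (\<lambda>p. {x \<in> linf \<omega> dg. (x (fst p), x (snd p), x (fst p * snd p)) \<in> ?mult})))"
    by (auto simp: is_character_iff)
  then show ?thesis using open_parts by (simp only: ind_open_Union)
qed

lemma ind_open_not_inf_character:
  fixes \<iota> :: "'k::real_normed_field \<Rightarrow> 'b::{comm_ring_1,real_normed_algebra_1,banach}"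
    and dg :: "'m::monoid_mult \<Rightarrow> nat"
  assumes bao: "banach_algebra_over \<iota>" and gf: "growth_family \<omega>"
  shows "ind_open \<iota> \<omega> dg (linf \<omega> dg - {\<phi>. is_inf_character \<iota> eps \<phi>})"
proof -
  interpret scalar_hom \<iota> by (rule banach_algebra_over_scalar_hom[OF bao])
  let ?der = "\<lambda>p. {z :: 'b \<times> 'b \<times> 'b. snd (snd z) \<noteq> fst z * \<iota> (eps (snd p)) + \<iota> (eps (fst p)) * fst (snd z)}"
  have der: "open (?der p)" for p by (intro open_Collect_neq continuous_intros)
  have open_parts: "ind_open \<iota> \<omega> dg V"
    if "V \<in> range (\<lambda>p. {x \<in> linf \<omega> dg. (x (fst p), x (snd p), x (fst p * snd p)) \<in> ?der p})" for V
    using that by (elim rangeE) (simp only: ind_open_coordinates[OF bao gf] der)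
  have "linf \<omega> dg - {\<phi>. is_inf_character \<iota> eps \<phi>}
      = \<Union> (range (\<lambda>p. {x \<in> linf \<omega> dg. (x (fst p), x (snd p), x (fst p * snd p)) \<in> ?der p}))"
    by (auto simp: is_inf_character_iff)
  then show ?thesis using open_parts by (simp only: ind_open_Union)
qed

locale controlled_hopf = hopf_convolution \<iota> deg Delta eps S
  for \<iota> :: "'k::real_normed_field \<Rightarrow> 'b::{comm_ring_1,real_normed_algebra_1,banach}"
    and deg Delta eps S +
  fixes \<omega> :: "nat \<Rightarrow> nat \<Rightarrow> nat"
  assumes banach: "banach_algebra_over \<iota>"
    and growth: "growth_family \<omega>"
    and control: "control_pair \<omega> deg Delta S"
begin

lemma hconv_controlled:
  assumes "\<phi> \<in> linf \<omega> deg" "\<psi> \<in> linf \<omega> deg"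
  shows "\<phi> \<star> \<psi> \<in> linf \<omega> deg"
proof -
  obtain T where "l1_cont_linear \<omega> deg (\<lambda>p. deg (fst p) + deg (snd p)) T"
    and "\<And>x. finsupp x \<Longrightarrow> T x = lin_ext Delta x"
    using control unfolding control_pair_def by blast
  then show ?thesis by (rule hconv_linf[OF banach growth _ _ finite_fsupp_Delta assms])
qed

lemma comp_S_controlled:
  assumes "\<phi> \<in> linf \<omega> deg"
  shows "comp_S \<iota> S \<phi> \<in> linf \<omega> deg"
proof -
  obtain T where "l1_cont_linear \<omega> deg deg T" and "\<And>x. finsupp x \<Longrightarrow> T x = lin_ext S x"
    using control unfolding control_pair_def by blast
  then show ?thesis by (rule comp_S_linf[OF banach growth _ _ finsupp_S[unfolded finsupp_def] assms])
qed

lemma ctr_chars_hunit: "hunit \<iota> eps \<in> ctr_chars \<iota> \<omega> deg"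
proof -
  have "hunit \<iota> eps \<in> linf \<omega> deg"
    unfolding eps_eq_hbasis by (rule hunit_hbasis_linf[OF banach growth])
  with character_hunit show ?thesis by (simp add: ctr_chars_def)
qed

lemma ctr_chars_hconv: "\<phi> \<in> ctr_chars \<iota> \<omega> deg \<Longrightarrow> \<psi> \<in> ctr_chars \<iota> \<omega> deg \<Longrightarrow> \<phi> \<star> \<psi> \<in> ctr_chars \<iota> \<omega> deg"
  by (simp add: ctr_chars_def character_hconv hconv_controlled)

lemma ctr_chars_antipode:
  assumes "\<phi> \<in> ctr_chars \<iota> \<omega> deg"
  shows "comp_S \<iota> S \<phi> \<in> ctr_chars \<iota> \<omega> deg"
    and "\<phi> \<star> comp_S \<iota> S \<phi> = hunit \<iota> eps" and "comp_S \<iota> S \<phi> \<star> \<phi> = hunit \<iota> eps"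
  using assms
  by (simp_all add: ctr_chars_def character_antipode comp_S_controlled hconv_antipode_left hconv_antipode_right)

lemma ctr_chars_subset_units: "ctr_chars \<iota> \<omega> deg \<subseteq> ctr_units \<iota> \<omega> deg Delta eps"
  using ctr_chars_antipode by (fastforce simp: ctr_units_def ctr_chars_def)

lemma ctr_chars_closed_in_units:
  "\<exists>V. ind_open \<iota> \<omega> deg V \<and>
     ctr_units \<iota> \<omega> deg Delta eps - ctr_chars \<iota> \<omega> deg = ctr_units \<iota> \<omega> deg Delta eps \<inter> V"
proof -
  have "ctr_units \<iota> \<omega> deg Delta eps - ctr_chars \<iota> \<omega> deg
      = ctr_units \<iota> \<omega> deg Delta eps \<inter> (linf \<omega> deg - {\<phi>. is_character \<iota> \<phi>})"
    by (auto simp: ctr_units_def ctr_chars_def)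
  with ind_open_not_character[OF banach growth] show ?thesis by blast
qed

lemma ctr_inf_chars_zero: "(\<lambda>_. 0) \<in> ctr_inf_chars \<iota> \<omega> deg eps"
  by (simp add: ctr_inf_chars_def is_inf_character_iff linf_iff) (metis mult_zero_left order_refl)

lemma ctr_inf_chars_lincomb:
  "\<phi> \<in> ctr_inf_chars \<iota> \<omega> deg eps \<Longrightarrow> \<psi> \<in> ctr_inf_chars \<iota> \<omega> deg eps \<Longrightarrow>
   (\<lambda>t. \<iota> a * \<phi> t + \<iota> b * \<psi> t) \<in> ctr_inf_chars \<iota> \<omega> deg eps"
  by (simp add: ctr_inf_chars_def inf_character_lincomb linf_lincomb[OF banach growth])

lemma ctr_inf_chars_bracket:
  assumes "\<phi> \<in> ctr_inf_chars \<iota> \<omega> deg eps" "\<psi> \<in> ctr_inf_chars \<iota> \<omega> deg eps"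
  shows "(\<lambda>t. (\<phi> \<star> \<psi>) t - (\<psi> \<star> \<phi>) t) \<in> ctr_inf_chars \<iota> \<omega> deg eps"
proof -
  have "(\<lambda>t. \<iota> 1 * (\<phi> \<star> \<psi>) t + \<iota> (- 1) * (\<psi> \<star> \<phi>) t) \<in> linf \<omega> deg"
    using assms by (intro linf_lincomb[OF banach growth] hconv_controlled) (simp_all add: ctr_inf_chars_def)
  with assms show ?thesis
    by (simp add: ctr_inf_chars_def inf_character_commutator scalar_1 scalar_uminus)
qed

lemma ctr_inf_chars_closed: "ind_open \<iota> \<omega> deg (linf \<omega> deg - ctr_inf_chars \<iota> \<omega> deg eps)"
proof -
  have "linf \<omega> deg - ctr_inf_chars \<iota> \<omega> deg eps = linf \<omega> deg - {\<phi>. is_inf_character \<iota> eps \<phi>}"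
    by (auto simp: ctr_inf_chars_def)
  with ind_open_not_inf_character[OF banach growth] show ?thesis by simp
qed

end

theorem lemma3p10:
  fixes \<iota> :: "'k::real_normed_field \<Rightarrow> 'b::{comm_ring_1,real_normed_algebra_1,banach}"
    and \<omega> :: "nat \<Rightarrow> nat \<Rightarrow> nat"
    and deg :: "'m::monoid_mult \<Rightarrow> nat" and Sig :: "'m set"
    and Delta :: "'m \<Rightarrow> 'm \<times> 'm \<Rightarrow> 'k" and eps :: "'m \<Rightarrow> 'k" and S :: "'m \<Rightarrow> 'm \<Rightarrow> 'k"
  assumes "R_or_C TYPE('k)"
    and "banach_algebra_over \<iota>"
    and "convex_growth_family \<omega>"
    and "combinatorial_hopf deg Sig Delta eps S"
    and "control_pair \<omega> deg Delta S"
  shows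
    \<comment> \<open>(1) controlled characters: closed subgroup of the unit group\<close>
    "(\<forall>\<phi>\<in>linf \<omega> deg. hconv \<iota> Delta (hunit \<iota> eps) \<phi> = \<phi> \<and> hconv \<iota> Delta \<phi> (hunit \<iota> eps) = \<phi>)
     \<and> hunit \<iota> eps \<in> ctr_chars \<iota> \<omega> deg
     \<and> ctr_chars \<iota> \<omega> deg \<subseteq> ctr_units \<iota> \<omega> deg Delta eps
     \<and> (\<forall>\<phi>\<in>ctr_chars \<iota> \<omega> deg. \<forall>\<psi>\<in>ctr_chars \<iota> \<omega> deg. hconv \<iota> Delta \<phi> \<psi> \<in> ctr_chars \<iota> \<omega> deg)
     \<and> (\<forall>\<phi>\<in>ctr_chars \<iota> \<omega> deg. comp_S \<iota> S \<phi> \<in> ctr_chars \<iota> \<omega> deg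
           \<and> hconv \<iota> Delta \<phi> (comp_S \<iota> S \<phi>) = hunit \<iota> eps
           \<and> hconv \<iota> Delta (comp_S \<iota> S \<phi>) \<phi> = hunit \<iota> eps)
     \<and> (\<exists>V. ind_open \<iota> \<omega> deg V \<and>
           ctr_units \<iota> \<omega> deg Delta eps - ctr_chars \<iota> \<omega> deg = ctr_units \<iota> \<omega> deg Delta eps \<inter> V)
     \<comment> \<open>(2) controlled infinitesimal characters: closed Lie subalgebra\<close>
     \<and> (\<lambda>_. 0) \<in> ctr_inf_chars \<iota> \<omega> deg eps
     \<and> (\<forall>\<phi>\<in>ctr_inf_chars \<iota> \<omega> deg eps. \<forall>\<psi>\<in>ctr_inf_chars \<iota> \<omega> deg eps. \<forall>a b.
           (\<lambda>t. \<iota> a * \<phi> t + \<iota> b * \<psi> t) \<in> ctr_inf_chars \<iota> \<omega> deg eps)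
     \<and> (\<forall>\<phi>\<in>ctr_inf_chars \<iota> \<omega> deg eps. \<forall>\<psi>\<in>ctr_inf_chars \<iota> \<omega> deg eps.
           (\<lambda>t. hconv \<iota> Delta \<phi> \<psi> t - hconv \<iota> Delta \<psi> \<phi> t) \<in> ctr_inf_chars \<iota> \<omega> deg eps)
     \<and> ind_open \<iota> \<omega> deg (linf \<omega> deg - ctr_inf_chars \<iota> \<omega> deg eps)"
proof -
  interpret scalar_hom \<iota> by (rule banach_algebra_over_scalar_hom[OF assms(2)])
  interpret controlled_hopf \<iota> deg Delta eps S \<omega>
    by unfold_locales (use assms in \<open>simp_all add: combinatorial_hopf_def convex_growth_family_def\<close>)
  show ?thesis
    by (intro conjI ballI allI subsetI)
      (simp_all add: hconv_hunit_left hconv_hunit_right ctr_chars_hunit ctr_chars_hconv ctr_chars_antipode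
        ctr_chars_closed_in_units ctr_inf_chars_zero ctr_inf_chars_lincomb ctr_inf_chars_bracket
        ctr_inf_chars_closed subsetD[OF ctr_chars_subset_units])
qed

end
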